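(* Let $\mathbb{C}$ be a pointed protomodular category and let $X$ be an object of $\mathbb{C}$ such that the generic split extension with kernel $X$ exists. Then the following two conditions are equivalent: (1) there is a generic split extension with kernel $[X]$ and the conjugation morphism $c_X:X\to[X]$ is a characteristic monomorphism; (2) $X$ has trivial center and $[X]$ is strong-complete.
   Context: $\mathbb{C}$ is pointed with finite limits; protomodular means the split short five lemma holds. A split extension is $X\xrightarrow{\kappa}A\underset{\beta}{\overset{\alpha}{\rightleftarrows}}B$ with $\alpha\beta=1_B$, $\kappa$ a kernel of $\alpha$. A generic split extension with kernel $X$, written $X\xrightarrow{k}[X]\ltimes X\underset{i}{\overset{p_1}{\rightleftarrows}}[X]$, is a terminal object in the category of split extensions with kernel $X$ and morphisms whose kernel component is $1_X$. The conjugation morphism $c_X:X\to[X]$ is the codomain component of the unique such morphism from $X\xrightarrow{\langle0,1\rangle}X\times X\underset{\langle1,1\rangle}{\overset{\pi_1}{\rightleftarrows}}X$ to the generic one. The center of $X$ is the terminal object among morphisms $g:B\to X$ commuting with $1_X$ (some $\varphi:B\times X\to X$ has $\varphi\langle1,0\rangle=g$, $\varphi\langle0,1\rangle=1_X$); trivial center means it is $0$. A protosplit monomorphism is a kernel of a split epimorphism; an object is strong-complete if every protosplit monomorphism with domain it is a split monomorphism with a unique retraction. A monomorphism $m:S\to Y$ is Bourn-normal if there is an equivalence relation $(R,r_1,r_2)$ on $Y$ and $\tilde m:S\times S\to R$ with $r_1\tilde m=m\pi_1$, $r_2\tilde m=m\pi_2$ and the square $r_1\tilde m=m\pi_1$ a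 pullback. A morphism $u:S\to X$ is a characteristic monomorphism if for every Bourn-normal monomorphism $n:X\to Y$ the composite $nu$ is a Bourn-normal monomorphism. *)

theory Defs
  imports Main
begin

text \<open>A (small-or-large) category presented by carriers: objects of type 'o,
  arrows of type 'm.  Comp C g f denotes the composite g after f.\<close>

record ('o, 'm) cat =
  Obj  :: "'o set"
  Arr  :: "'m set"
  Dom  :: "'m \<Rightarrow> 'o"
  Cod  :: "'m \<Rightarrow> 'o"
  Id   :: "'o \<Rightarrow> 'm"
  Comp :: "'m \<Rightarrow> 'm \<Rightarrow> 'm"

definition hom :: "('o, 'm) cat \<Rightarrow> 'o \<Rightarrow> 'o \<Rightarrow> 'm set" where
  "hom C a b = {f \<in> Arr C. Dom C f = a \<and> Cod C f = b}"

definition category :: "('o, 'm) cat \<Rightarrow> bool" where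
  "category C \<longleftrightarrow>
     (\<forall>f \<in> Arr C. Dom C f \<in> Obj C \<and> Cod C f \<in> Obj C) \<and>
     (\<forall>a \<in> Obj C. Id C a \<in> hom C a a) \<and>
     (\<forall>f \<in> Arr C. \<forall>g \<in> Arr C. Cod C f = Dom C g \<longrightarrow>
         Comp C g f \<in> hom C (Dom C f) (Cod C g)) \<and>
     (\<forall>f \<in> Arr C. \<forall>g \<in> Arr C. \<forall>h \<in> Arr C.
         Cod C f = Dom C g \<and> Cod C g = Dom C h \<longrightarrow>
         Comp C h (Comp C g f) = Comp C (Comp C h g) f) \<and>
     (\<forall>f \<in> Arr C. Comp C (Id C (Cod C f)) f = f \<and> Comp C f (Id C (Dom C f)) = f)"

definition is_iso :: "('o, 'm) cat \<Rightarrow> 'm \<Rightarrow> bool" where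
  "is_iso C f \<longleftrightarrow> f \<in> Arr C \<and>
     (\<exists>g \<in> hom C (Cod C f) (Dom C f).
        Comp C g f = Id C (Dom C f) \<and> Comp C f g = Id C (Cod C f))"

definition is_mono :: "('o, 'm) cat \<Rightarrow> 'm \<Rightarrow> bool" where
  "is_mono C f \<longleftrightarrow> f \<in> Arr C \<and>
     (\<forall>g h. g \<in> Arr C \<and> h \<in> Arr C \<and> Cod C g = Dom C f \<and> Cod C h = Dom C f \<and>
        Dom C g = Dom C h \<and> Comp C f g = Comp C f h \<longrightarrow> g = h)"

definition is_terminal :: "('o, 'm) cat \<Rightarrow> 'o \<Rightarrow> bool" where
  "is_terminal C t \<longleftrightarrow> t \<in> Obj C \<and> (\<forall>a \<in> Obj C. \<exists>!f. f \<in> hom C a t)"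

definition is_initial :: "('o, 'm) cat \<Rightarrow> 'o \<Rightarrow> bool" where
  "is_initial C t \<longleftrightarrow> t \<in> Obj C \<and> (\<forall>a \<in> Obj C. \<exists>!f. f \<in> hom C t a)"

definition is_zero_obj :: "('o, 'm) cat \<Rightarrow> 'o \<Rightarrow> bool" where
  "is_zero_obj C z \<longleftrightarrow> is_initial C z \<and> is_terminal C z"

definition pointed :: "('o, 'm) cat \<Rightarrow> bool" where
  "pointed C \<longleftrightarrow> (\<exists>z. is_zero_obj C z)"

definition zero_arr :: "('o, 'm) cat \<Rightarrow> 'm \<Rightarrow> bool" where
  "zero_arr C f \<longleftrightarrow> f \<in> Arr C \<and>
     (\<exists>z g h. is_zero_obj C z \<and> g \<in> hom C (Dom C f) z \<and> h \<in> hom C z (Cod C f) \<and>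
        f = Comp C h g)"

definition is_pullback :: "('o, 'm) cat \<Rightarrow> 'm \<Rightarrow> 'm \<Rightarrow> 'm \<Rightarrow> 'm \<Rightarrow> bool" where
  "is_pullback C f g p q \<longleftrightarrow>
     f \<in> Arr C \<and> g \<in> Arr C \<and> Cod C f = Cod C g \<and>
     p \<in> hom C (Dom C p) (Dom C f) \<and> q \<in> hom C (Dom C p) (Dom C g) \<and>
     Comp C f p = Comp C g q \<and>
     (\<forall>x y. x \<in> Arr C \<and> y \<in> Arr C \<and> Dom C x = Dom C y \<and> Cod C x = Dom C f \<and>
        Cod C y = Dom C g \<and> Comp C f x = Comp C g y \<longrightarrow>
        (\<exists>!h. h \<in> hom C (Dom C x) (Dom C p) \<and> Comp C p h = x \<and> Comp C q h = y))"

definition is_product :: "('o, 'm) cat \<Rightarrow> 'o \<Rightarrow> 'o \<Rightarrow> 'o \<Rightarrow> 'm \<Rightarrow> 'm \<Rightarrow> bool" where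
  "is_product C A B P p1 p2 \<longleftrightarrow>
     P \<in> Obj C \<and> p1 \<in> hom C P A \<and> p2 \<in> hom C P B \<and>
     (\<forall>Z f g. f \<in> hom C Z A \<and> g \<in> hom C Z B \<longrightarrow>
        (\<exists>!h. h \<in> hom C Z P \<and> Comp C p1 h = f \<and> Comp C p2 h = g))"

definition finitely_complete :: "('o, 'm) cat \<Rightarrow> bool" where
  "finitely_complete C \<longleftrightarrow> (\<exists>t. is_terminal C t) \<and>
     (\<forall>f g. f \<in> Arr C \<and> g \<in> Arr C \<and> Cod C f = Cod C g \<longrightarrow>
        (\<exists>p q. is_pullback C f g p q))"

definition is_kernel :: "('o, 'm) cat \<Rightarrow> 'm \<Rightarrow> 'm \<Rightarrow> bool" where
  "is_kernel C k a \<longleftrightarrow> k \<in> Arr C \<and> a \<in> Arr C \<and> Cod C k = Dom C a \<and>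
     zero_arr C (Comp C a k) \<and>
     (\<forall>f. f \<in> Arr C \<and> Cod C f = Dom C a \<and> zero_arr C (Comp C a f) \<longrightarrow>
        (\<exists>!g. g \<in> hom C (Dom C f) (Dom C k) \<and> Comp C k g = f))"

definition split_ext :: "('o, 'm) cat \<Rightarrow> 'm \<Rightarrow> 'm \<Rightarrow> 'm \<Rightarrow> bool" where
  "split_ext C \<kappa> \<alpha> \<beta> \<longleftrightarrow>
     \<alpha> \<in> Arr C \<and> \<beta> \<in> hom C (Cod C \<alpha>) (Dom C \<alpha>) \<and>
     Comp C \<alpha> \<beta> = Id C (Cod C \<alpha>) \<and> is_kernel C \<kappa> \<alpha>"

text \<open>Morphism (v,w) of split extensions with the same kernel whose kernel
  component is the identity.\<close>
definition split_ext_mor ::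
  "('o, 'm) cat \<Rightarrow> 'm \<Rightarrow> 'm \<Rightarrow> 'm \<Rightarrow> 'm \<Rightarrow> 'm \<Rightarrow> 'm \<Rightarrow> 'm \<Rightarrow> 'm \<Rightarrow> bool" where
  "split_ext_mor C \<kappa> \<alpha> \<beta> \<kappa>' \<alpha>' \<beta>' v w \<longleftrightarrow>
     v \<in> hom C (Dom C \<alpha>) (Dom C \<alpha>') \<and> w \<in> hom C (Cod C \<alpha>) (Cod C \<alpha>') \<and>
     Comp C v \<kappa> = \<kappa>' \<and> Comp C \<alpha>' v = Comp C w \<alpha> \<and> Comp C v \<beta> = Comp C \<beta>' w"

text \<open>Generic split extension with kernel X:  X --k--> [X] x| X  with p1 : -> [X], i.\<close>
definition generic_split_ext :: "('o, 'm) cat \<Rightarrow> 'o \<Rightarrow> 'm \<Rightarrow> 'm \<Rightarrow> 'm \<Rightarrow> bool" where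
  "generic_split_ext C X k p i \<longleftrightarrow>
     split_ext C k p i \<and> Dom C k = X \<and>
     (\<forall>\<kappa> \<alpha> \<beta>. split_ext C \<kappa> \<alpha> \<beta> \<and> Dom C \<kappa> = X \<longrightarrow>
        (\<exists>!vw. split_ext_mor C \<kappa> \<alpha> \<beta> k p i (fst vw) (snd vw)))"

text \<open>Protomodularity: the split short five lemma.\<close>
definition protomodular :: "('o, 'm) cat \<Rightarrow> bool" where
  "protomodular C \<longleftrightarrow>
     (\<forall>\<kappa> \<alpha> \<beta> \<kappa>' \<alpha>' \<beta>' u v w.
        split_ext C \<kappa> \<alpha> \<beta> \<and> split_ext C \<kappa>' \<alpha>' \<beta>' \<and>
        u \<in> hom C (Dom C \<kappa>) (Dom C \<kappa>') \<and>
        v \<in> hom C (Dom C \<alpha>) (Dom C \<alpha>') \<and> w \<in> hom C (Cod C \<alpha>) (Cod C \<alpha>') \<and>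
        Comp C v \<kappa> = Comp C \<kappa>' u \<and> Comp C \<alpha>' v = Comp C w \<alpha> \<and>
        Comp C v \<beta> = Comp C \<beta>' w \<and> is_iso C u \<and> is_iso C w \<longrightarrow> is_iso C v)"

text \<open>c is the conjugation morphism c_X : X -> [X] w.r.t. the generic split extension
  (k,p,i): codomain component of the morphism from X --<0,1>--> X x X (pi1, <1,1>).\<close>
definition conjugation :: "('o, 'm) cat \<Rightarrow> 'o \<Rightarrow> 'm \<Rightarrow> 'm \<Rightarrow> 'm \<Rightarrow> 'm \<Rightarrow> bool" where
  "conjugation C X k p i c \<longleftrightarrow>
     (\<exists>P \<pi>1 \<pi>2 d e v. is_product C X X P \<pi>1 \<pi>2 \<and>
        d \<in> hom C X P \<and> zero_arr C (Comp C \<pi>1 d) \<and> Comp C \<pi>2 d = Id C X \<and>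
        e \<in> hom C X P \<and> Comp C \<pi>1 e = Id C X \<and> Comp C \<pi>2 e = Id C X \<and>
        split_ext_mor C d \<pi>1 e k p i v c)"

definition commute :: "('o, 'm) cat \<Rightarrow> 'm \<Rightarrow> 'm \<Rightarrow> bool" where
  "commute C g f \<longleftrightarrow> g \<in> Arr C \<and> f \<in> Arr C \<and> Cod C g = Cod C f \<and>
     (\<exists>P p1 p2 l r \<phi>. is_product C (Dom C g) (Dom C f) P p1 p2 \<and>
        l \<in> hom C (Dom C g) P \<and> Comp C p1 l = Id C (Dom C g) \<and> zero_arr C (Comp C p2 l) \<and>
        r \<in> hom C (Dom C f) P \<and> zero_arr C (Comp C p1 r) \<and> Comp C p2 r = Id C (Dom C f) \<and>
        \<phi> \<in> hom C P (Cod C f) \<and> Comp C \<phi> l = g \<and> Comp C \<phi> r = f)"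

definition is_center :: "('o, 'm) cat \<Rightarrow> 'o \<Rightarrow> 'm \<Rightarrow> bool" where
  "is_center C X z \<longleftrightarrow> z \<in> Arr C \<and> Cod C z = X \<and> commute C z (Id C X) \<and>
     (\<forall>g. g \<in> Arr C \<and> Cod C g = X \<and> commute C g (Id C X) \<longrightarrow>
        (\<exists>!h. h \<in> hom C (Dom C g) (Dom C z) \<and> Comp C z h = g))"

definition trivial_center :: "('o, 'm) cat \<Rightarrow> 'o \<Rightarrow> bool" where
  "trivial_center C X \<longleftrightarrow> (\<exists>z. is_center C X z \<and> is_zero_obj C (Dom C z))"

definition protosplit_mono :: "('o, 'm) cat \<Rightarrow> 'm \<Rightarrow> bool" where
  "protosplit_mono C m \<longleftrightarrow>
     (\<exists>a b. is_kernel C m a \<and> b \<in> hom C (Cod C a) (Dom C a) \<and>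
        Comp C a b = Id C (Cod C a))"

definition strong_complete :: "('o, 'm) cat \<Rightarrow> 'o \<Rightarrow> bool" where
  "strong_complete C Y \<longleftrightarrow> Y \<in> Obj C \<and>
     (\<forall>m. protosplit_mono C m \<and> Dom C m = Y \<longrightarrow>
        (\<exists>!r. r \<in> hom C (Cod C m) Y \<and> Comp C r m = Id C Y))"

definition equiv_rel :: "('o, 'm) cat \<Rightarrow> 'o \<Rightarrow> 'm \<Rightarrow> 'm \<Rightarrow> bool" where
  "equiv_rel C Y r1 r2 \<longleftrightarrow>
     r1 \<in> hom C (Dom C r1) Y \<and> r2 \<in> hom C (Dom C r1) Y \<and>
     (\<forall>x y. x \<in> Arr C \<and> y \<in> Arr C \<and> Cod C x = Dom C r1 \<and> Cod C y = Dom C r1 \<and>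
        Dom C x = Dom C y \<and> Comp C r1 x = Comp C r1 y \<and> Comp C r2 x = Comp C r2 y
        \<longrightarrow> x = y) \<and>
     (\<exists>d \<in> hom C Y (Dom C r1). Comp C r1 d = Id C Y \<and> Comp C r2 d = Id C Y) \<and>
     (\<exists>s \<in> hom C (Dom C r1) (Dom C r1). Comp C r1 s = r2 \<and> Comp C r2 s = r1) \<and>
     (\<forall>p q. is_pullback C r2 r1 p q \<longrightarrow>
        (\<exists>t \<in> hom C (Dom C p) (Dom C r1).
           Comp C r1 t = Comp C r1 p \<and> Comp C r2 t = Comp C r2 q))"

definition bourn_normal :: "('o, 'm) cat \<Rightarrow> 'm \<Rightarrow> bool" where
  "bourn_normal C m \<longleftrightarrow> is_mono C m \<and>
     (\<exists>r1 r2 P \<pi>1 \<pi>2 mt. equiv_rel C (Cod C m) r1 r2 \<and>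
        is_product C (Dom C m) (Dom C m) P \<pi>1 \<pi>2 \<and>
        mt \<in> hom C P (Dom C r1) \<and>
        Comp C r1 mt = Comp C m \<pi>1 \<and> Comp C r2 mt = Comp C m \<pi>2 \<and>
        is_pullback C r1 m mt \<pi>1)"

definition characteristic_mono :: "('o, 'm) cat \<Rightarrow> 'm \<Rightarrow> bool" where
  "characteristic_mono C u \<longleftrightarrow> u \<in> Arr C \<and>
     (\<forall>n. bourn_normal C n \<and> Dom C n = Cod C u \<longrightarrow> bourn_normal C (Comp C n u))"

end

theory Submission
  imports Defs
begin

(* In a pointed protomodular category split extensions are jointly strongly epic (a monomorphism
   through which kernel and section factor is invertible), a morphism of split extensions with
   the same kernel is a pullback square, and reflexive relations are equivalence relations.
   With the generic split extension k, p, i of X these give: g commutes with 1_X iff c_X g = 0,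
   so X has trivial center iff c_X is monic.

   (1) => (2).  Characteristic monomorphisms are monic.  A protosplit m : [X] -> A is Bourn-normal,
   hence so is m c_X, say to the relation R on A.  The kernel of the first projection of R is X,
   and the base component of the classifying morphism of this split extension is a retraction
   of m; it is unique because c_X monic makes p jointly monic with the map pr2 : [X] x| X -> [X]
   determined by pr2 k = c_X and pr2 i = 1.

   (2) => (1).  If [X] is strong-complete, [X] -> [X] x [X] -> [X] is the generic split extension
   with kernel [X].  If n : [X] -> Z is Bourn-normal to R, strong-completeness gives a retraction
   rho of the kernel of the first projection r1 of R.  Restricting R to the part on which
   (rho delta r1, rho), with delta the diagonal of R, lifts along (p, pr2) yields an equivalence
   relation to which n c_X is normal. *)

section \<open>Categories\<close>

lemma homI: "f \<in> Arr C \<Longrightarrow> Dom C f = a \<Longrightarrow> Cod C f = b \<Longrightarrow> f \<in> hom C a b"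
  by (simp add: hom_def)

lemma homD: "f \<in> hom C a b \<Longrightarrow> f \<in> Arr C" "f \<in> hom C a b \<Longrightarrow> Dom C f = a"
  "f \<in> hom C a b \<Longrightarrow> Cod C f = b"
  by (simp_all add: hom_def)

lemma ex1_unique: "\<exists>!x. P x \<Longrightarrow> P a \<Longrightarrow> P b \<Longrightarrow> a = b"
  by blast

definition jointly_monic :: "('o, 'm) cat \<Rightarrow> 'm \<Rightarrow> 'm \<Rightarrow> bool" where
  "jointly_monic C r1 r2 \<longleftrightarrow> (\<forall>x y. x \<in> Arr C \<and> y \<in> Arr C \<and> Cod C x = Dom C r1 \<and> Cod C y = Dom C r1 \<and>
     Dom C x = Dom C y \<and> Comp C r1 x = Comp C r1 y \<and> Comp C r2 x = Comp C r2 y \<longrightarrow> x = y)"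

locale categ =
  fixes C :: "('o, 'm) cat"
  assumes cat: "category C"
begin

abbreviation comp (infixr "\<cdot>" 55) where "g \<cdot> f \<equiv> Comp C g f"

lemma Dom_Obj [simp]: "f \<in> Arr C \<Longrightarrow> Dom C f \<in> Obj C"
  using cat unfolding category_def by blast

lemma Cod_Obj [simp]: "f \<in> Arr C \<Longrightarrow> Cod C f \<in> Obj C"
  using cat unfolding category_def by blast

lemma Id_hom: "a \<in> Obj C \<Longrightarrow> Id C a \<in> hom C a a"
  using cat unfolding category_def by blast

lemma Id_simps [simp]:
  "a \<in> Obj C \<Longrightarrow> Id C a \<in> Arr C" "a \<in> Obj C \<Longrightarrow> Dom C (Id C a) = a" "a \<in> Obj C \<Longrightarrow> Cod C (Id C a) = a"
  using Id_hom homD by metis+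

lemma comp_in_hom: "f \<in> Arr C \<Longrightarrow> g \<in> Arr C \<Longrightarrow> Cod C f = Dom C g \<Longrightarrow> g \<cdot> f \<in> hom C (Dom C f) (Cod C g)"
  using cat unfolding category_def by blast

lemma comp_simps [simp]:
  assumes "f \<in> Arr C" "g \<in> Arr C" "Cod C f = Dom C g"
  shows "g \<cdot> f \<in> Arr C" "Dom C (g \<cdot> f) = Dom C f" "Cod C (g \<cdot> f) = Cod C g"
  using comp_in_hom[OF assms] homD by metis+

lemma comp_assoc [simp]:
  "f \<in> Arr C \<Longrightarrow> g \<in> Arr C \<Longrightarrow> h \<in> Arr C \<Longrightarrow> Cod C f = Dom C g \<Longrightarrow> Cod C g = Dom C h \<Longrightarrow>
   (h \<cdot> g) \<cdot> f = h \<cdot> (g \<cdot> f)"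
  using cat unfolding category_def by metis

lemma comp_Id_left [simp]: "f \<in> Arr C \<Longrightarrow> Cod C f = b \<Longrightarrow> Id C b \<cdot> f = f"
  using cat unfolding category_def by blast

lemma comp_Id_right [simp]: "f \<in> Arr C \<Longrightarrow> Dom C f = a \<Longrightarrow> f \<cdot> Id C a = f"
  using cat unfolding category_def by blast

lemma comp_hom: "f \<in> hom C a b \<Longrightarrow> g \<in> hom C b c \<Longrightarrow> g \<cdot> f \<in> hom C a c"
  by (auto simp: hom_def)

lemma hom_Obj: "f \<in> hom C a b \<Longrightarrow> a \<in> Obj C" "f \<in> hom C a b \<Longrightarrow> b \<in> Obj C"
  by (auto simp: hom_def)

lemma comp_reassoc:
  "g \<cdot> f = h \<Longrightarrow> f \<in> Arr C \<Longrightarrow> g \<in> Arr C \<Longrightarrow> Cod C f = Dom C g \<Longrightarrow> x \<in> Arr C \<Longrightarrow> Cod C x = Dom C f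
   \<Longrightarrow> g \<cdot> (f \<cdot> x) = h \<cdot> x"
  by (metis comp_assoc)

lemma comp_reassoc3:
  "h \<cdot> (g \<cdot> f) = r \<Longrightarrow> f \<in> Arr C \<Longrightarrow> g \<in> Arr C \<Longrightarrow> h \<in> Arr C \<Longrightarrow> Cod C f = Dom C g \<Longrightarrow>
   Cod C g = Dom C h \<Longrightarrow> x \<in> Arr C \<Longrightarrow> Cod C x = Dom C f \<Longrightarrow> h \<cdot> (g \<cdot> (f \<cdot> x)) = r \<cdot> x"
  by (metis comp_assoc comp_simps)

lemma monoI:
  "f \<in> Arr C \<Longrightarrow>
   (\<And>W g h. g \<in> hom C W (Dom C f) \<Longrightarrow> h \<in> hom C W (Dom C f) \<Longrightarrow> f \<cdot> g = f \<cdot> h \<Longrightarrow> g = h) \<Longrightarrow>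
   is_mono C f"
  unfolding is_mono_def by (metis homI)

lemma monoD: "is_mono C f \<Longrightarrow> g \<in> hom C W (Dom C f) \<Longrightarrow> h \<in> hom C W (Dom C f) \<Longrightarrow> f \<cdot> g = f \<cdot> h \<Longrightarrow> g = h"
  unfolding is_mono_def by (auto simp: hom_def)

lemma mono_Arr: "is_mono C f \<Longrightarrow> f \<in> Arr C"
  unfolding is_mono_def by blast

lemma mono_comp:
  assumes "is_mono C f" "is_mono C g" "Cod C f = Dom C g"
  shows "is_mono C (g \<cdot> f)"
proof -
  have f: "f \<in> Arr C" and g: "g \<in> Arr C" using assms mono_Arr by auto
  show ?thesis
  proof (rule monoI)
    show "g \<cdot> f \<in> Arr C" using f g assms by simp
    fix W x y assume x: "x \<in> hom C W (Dom C (g \<cdot> f))" and y: "y \<in> hom C W (Dom C (g \<cdot> f))"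
      and e: "(g \<cdot> f) \<cdot> x = (g \<cdot> f) \<cdot> y"
    have "g \<cdot> (f \<cdot> x) = g \<cdot> (f \<cdot> y)" using e x y f g assms by (auto simp: hom_def)
    then have "f \<cdot> x = f \<cdot> y" using monoD[OF assms(2)] x y f g assms by (auto simp: hom_def)
    then show "x = y" using monoD[OF assms(1)] x y f g assms by (auto simp: hom_def)
  qed
qed

lemma mono_comp_cancel:
  assumes "is_mono C (g \<cdot> f)" "f \<in> Arr C" "g \<in> Arr C" "Cod C f = Dom C g"
  shows "is_mono C f"
proof (rule monoI)
  fix W x y assume x: "x \<in> hom C W (Dom C f)" and y: "y \<in> hom C W (Dom C f)" and e: "f \<cdot> x = f \<cdot> y"
  have "(g \<cdot> f) \<cdot> x = (g \<cdot> f) \<cdot> y" using e x y assms by (auto simp: hom_def)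
  then show "x = y" using monoD[OF assms(1)] x y assms by (auto simp: hom_def)
qed (rule assms)

lemma isoE:
  assumes "is_iso C f"
  obtains g where "g \<in> hom C (Cod C f) (Dom C f)" "g \<cdot> f = Id C (Dom C f)" "f \<cdot> g = Id C (Cod C f)"
  using assms unfolding is_iso_def by blast

lemma iso_mono: assumes "is_iso C f" shows "is_mono C f"
proof (rule monoI)
  show "f \<in> Arr C" using assms unfolding is_iso_def by blast
  obtain g where g: "g \<in> hom C (Cod C f) (Dom C f)" "g \<cdot> f = Id C (Dom C f)" using isoE[OF assms] by blast
  fix W x y assume x: "x \<in> hom C W (Dom C f)" and y: "y \<in> hom C W (Dom C f)" and e: "f \<cdot> x = f \<cdot> y"
  have "(g \<cdot> f) \<cdot> x = (g \<cdot> f) \<cdot> y" using e x y g(1) \<open>f \<in> Arr C\<close> by (auto simp: hom_def)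
  moreover have "(g \<cdot> f) \<cdot> x = x" "(g \<cdot> f) \<cdot> y = y" unfolding g(2) using x y by (auto simp: hom_def)
  ultimately show "x = y" by simp
qed

lemma Id_iso: "a \<in> Obj C \<Longrightarrow> is_iso C (Id C a)"
  unfolding is_iso_def using Id_hom by (intro conjI bexI[of _ "Id C a"]) auto

lemma pullbackD:
  assumes "is_pullback C f g p q"
  shows "p \<in> hom C (Dom C p) (Dom C f)" "q \<in> hom C (Dom C p) (Dom C g)" "f \<cdot> p = g \<cdot> q"
    "f \<in> Arr C" "g \<in> Arr C" "Cod C f = Cod C g"
proof -
  have "f \<in> Arr C \<and> g \<in> Arr C \<and> Cod C f = Cod C g \<and> p \<in> hom C (Dom C p) (Dom C f) \<and>
      q \<in> hom C (Dom C p) (Dom C g) \<and> f \<cdot> p = g \<cdot> q"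
    using assms unfolding is_pullback_def by (elim conjE) (intro conjI; assumption)
  then show "p \<in> hom C (Dom C p) (Dom C f)" "q \<in> hom C (Dom C p) (Dom C g)" "f \<cdot> p = g \<cdot> q"
    "f \<in> Arr C" "g \<in> Arr C" "Cod C f = Cod C g" by simp_all
qed

lemma pullback_universal:
  assumes "is_pullback C f g p q" "x \<in> hom C W (Dom C f)" "y \<in> hom C W (Dom C g)" "f \<cdot> x = g \<cdot> y"
  shows "\<exists>!h. h \<in> hom C W (Dom C p) \<and> p \<cdot> h = x \<and> q \<cdot> h = y"
proof -
  have H: "\<forall>x y. x \<in> Arr C \<and> y \<in> Arr C \<and> Dom C x = Dom C y \<and> Cod C x = Dom C f \<and>
      Cod C y = Dom C g \<and> f \<cdot> x = g \<cdot> y \<longrightarrow>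
      (\<exists>!h. h \<in> hom C (Dom C x) (Dom C p) \<and> p \<cdot> h = x \<and> q \<cdot> h = y)"
    using assms(1) unfolding is_pullback_def by (elim conjE)
  have "x \<in> Arr C \<and> y \<in> Arr C \<and> Dom C x = Dom C y \<and> Cod C x = Dom C f \<and>
      Cod C y = Dom C g \<and> f \<cdot> x = g \<cdot> y" "Dom C x = W"
    using assms(2-) by (simp_all add: hom_def)
  then show ?thesis using H by metis
qed

lemma pullback_factor:
  assumes "is_pullback C f g p q" "x \<in> hom C W (Dom C f)" "y \<in> hom C W (Dom C g)" "f \<cdot> x = g \<cdot> y"
  obtains h where "h \<in> hom C W (Dom C p)" "p \<cdot> h = x" "q \<cdot> h = y"
  using ex1_implies_ex[OF pullback_universal[OF assms]] by blast

lemma pullback_unique: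
  assumes pb: "is_pullback C f g p q" and h: "h \<in> hom C W (Dom C p)" "h' \<in> hom C W (Dom C p)"
    and e: "p \<cdot> h = p \<cdot> h'" "q \<cdot> h = q \<cdot> h'"
  shows "h = h'"
proof -
  note pd = pullbackD[OF pb]
  have "p \<cdot> h \<in> hom C W (Dom C f)" "q \<cdot> h \<in> hom C W (Dom C g)" "f \<cdot> (p \<cdot> h) = g \<cdot> (q \<cdot> h)"
    using h pd by (simp_all add: hom_def comp_reassoc[OF pd(3)])
  from pullback_universal[OF pb this] show ?thesis
    by (rule ex1_unique) (use h e in simp_all)
qed

lemma pullbackI:
  assumes "f \<in> hom C A Z" "g \<in> hom C B Z" "p \<in> hom C P A" "q \<in> hom C P B" "f \<cdot> p = g \<cdot> q"
    and factor: "\<And>W x y. x \<in> hom C W A \<Longrightarrow> y \<in> hom C W B \<Longrightarrow> f \<cdot> x = g \<cdot> y \<Longrightarrow>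
      \<exists>h \<in> hom C W P. p \<cdot> h = x \<and> q \<cdot> h = y"
    and unique: "\<And>W h h'. h \<in> hom C W P \<Longrightarrow> h' \<in> hom C W P \<Longrightarrow> p \<cdot> h = p \<cdot> h' \<Longrightarrow>
      q \<cdot> h = q \<cdot> h' \<Longrightarrow> h = h'"
  shows "is_pullback C f g p q"
  unfolding is_pullback_def
proof (intro conjI allI impI)
  fix x y
  assume a: "x \<in> Arr C \<and> y \<in> Arr C \<and> Dom C x = Dom C y \<and> Cod C x = Dom C f \<and> Cod C y = Dom C g \<and>
    f \<cdot> x = g \<cdot> y"
  then have "x \<in> hom C (Dom C x) A" "y \<in> hom C (Dom C x) B" using assms(1-5) by (simp_all add: hom_def)
  then obtain h where h: "h \<in> hom C (Dom C x) P" "p \<cdot> h = x" "q \<cdot> h = y" using factor a by blast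
  moreover have "Dom C p = P" using assms(3) by (simp add: hom_def)
  ultimately show "\<exists>!h. h \<in> hom C (Dom C x) (Dom C p) \<and> p \<cdot> h = x \<and> q \<cdot> h = y"
    using unique by metis
qed (use assms(1-5) in \<open>simp_all add: hom_def\<close>)

lemma pullback_mono:
  assumes pb: "is_pullback C f g p q" and g: "is_mono C g"
  shows "is_mono C p"
proof (rule monoI)
  note pd = pullbackD[OF pb]
  show "p \<in> Arr C" using pd(1) by (simp add: hom_def)
  fix W x y assume x: "x \<in> hom C W (Dom C p)" and y: "y \<in> hom C W (Dom C p)" and e: "p \<cdot> x = p \<cdot> y"
  have "g \<cdot> (q \<cdot> x) = g \<cdot> (q \<cdot> y)"
    using pd(1,2,4-6) x y e by (simp add: hom_def comp_reassoc[OF pd(3)[symmetric]])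
  then have "q \<cdot> x = q \<cdot> y" using monoD[OF g] x y pd by (auto simp: hom_def)
  then show "x = y" using pullback_unique[OF pb x y e] by blast
qed

lemma pullback_comp_iso:
  assumes pb: "is_pullback C f g a b" and t: "is_iso C t" "Cod C t = Dom C a"
  shows "is_pullback C f g (a \<cdot> t) (b \<cdot> t)"
proof -
  note pd = pullbackD[OF pb]
  obtain j where j: "j \<in> hom C (Dom C a) (Dom C t)" "j \<cdot> t = Id C (Dom C t)" "t \<cdot> j = Id C (Dom C a)"
    using isoE[OF t(1)] t(2) by metis
  have th: "t \<in> hom C (Dom C t) (Dom C a)" using t iso_mono mono_Arr by (simp add: hom_def)
  show ?thesis
  proof (rule pullbackI[of f _ _ g _ _ "Dom C t"])
    show "f \<in> hom C (Dom C f) (Cod C f)" "g \<in> hom C (Dom C g) (Cod C f)" using pd by (simp_all add: hom_def)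
    show "a \<cdot> t \<in> hom C (Dom C t) (Dom C f)" "b \<cdot> t \<in> hom C (Dom C t) (Dom C g)"
      using th pd comp_hom by blast+
    show "f \<cdot> a \<cdot> t = g \<cdot> b \<cdot> t" using th pd by (simp add: hom_def comp_reassoc[OF pd(3)])
  next
    fix W x y assume x: "x \<in> hom C W (Dom C f)" and y: "y \<in> hom C W (Dom C g)" and e: "f \<cdot> x = g \<cdot> y"
    obtain h where h: "h \<in> hom C W (Dom C a)" "a \<cdot> h = x" "b \<cdot> h = y"
      using pullback_factor[OF pb x y e] .
    have "(a \<cdot> t) \<cdot> (j \<cdot> h) = x" "(b \<cdot> t) \<cdot> (j \<cdot> h) = y"
      using h j th pd by (auto simp: hom_def comp_reassoc[OF j(3)])
    then show "\<exists>h'\<in>hom C W (Dom C t). (a \<cdot> t) \<cdot> h' = x \<and> (b \<cdot> t) \<cdot> h' = y"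
      using h(1) j(1) comp_hom by blast
  next
    fix W h h' assume h: "h \<in> hom C W (Dom C t)" "h' \<in> hom C W (Dom C t)"
      and e: "(a \<cdot> t) \<cdot> h = (a \<cdot> t) \<cdot> h'" "(b \<cdot> t) \<cdot> h = (b \<cdot> t) \<cdot> h'"
    have "t \<cdot> h = t \<cdot> h'"
      by (rule pullback_unique[OF pb, of _ W]) (use h e th pd in \<open>auto simp: hom_def\<close>)
    then show "h = h'" using monoD[OF iso_mono[OF t(1)]] h by blast
  qed
qed

lemma productD:
  assumes "is_product C A B P p1 p2"
  shows "P \<in> Obj C" "p1 \<in> hom C P A" "p2 \<in> hom C P B"
proof -
  have "P \<in> Obj C \<and> p1 \<in> hom C P A \<and> p2 \<in> hom C P B"
    using assms unfolding is_product_def by (elim conjE) (intro conjI; assumption)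
  then show "P \<in> Obj C" "p1 \<in> hom C P A" "p2 \<in> hom C P B" by simp_all
qed

lemma product_universal:
  assumes "is_product C A B P p1 p2" "f \<in> hom C Z A" "g \<in> hom C Z B"
  shows "\<exists>!h. h \<in> hom C Z P \<and> p1 \<cdot> h = f \<and> p2 \<cdot> h = g"
proof -
  have "\<forall>Z f g. f \<in> hom C Z A \<and> g \<in> hom C Z B \<longrightarrow>
      (\<exists>!h. h \<in> hom C Z P \<and> p1 \<cdot> h = f \<and> p2 \<cdot> h = g)"
    using assms(1) unfolding is_product_def by (elim conjE)
  then show ?thesis using assms(2,3) by blast
qed

lemma product_factor:
  assumes "is_product C A B P p1 p2" "f \<in> hom C Z A" "g \<in> hom C Z B"
  obtains h where "h \<in> hom C Z P" "p1 \<cdot> h = f" "p2 \<cdot> h = g"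
  using ex1_implies_ex[OF product_universal[OF assms]] by blast

lemma product_unique:
  assumes P: "is_product C A B P p1 p2" and h: "h \<in> hom C Z P" "h' \<in> hom C Z P"
    and e: "p1 \<cdot> h = p1 \<cdot> h'" "p2 \<cdot> h = p2 \<cdot> h'"
  shows "h = h'"
proof -
  have "p1 \<cdot> h \<in> hom C Z A" "p2 \<cdot> h \<in> hom C Z B" using P h productD comp_hom by blast+
  from product_universal[OF P this] show ?thesis
    by (rule ex1_unique) (use h e in simp_all)
qed

lemma pullback_over_terminal_is_product:
  assumes t: "is_terminal C t" and pb: "is_pullback C f g p q"
    and f: "f \<in> hom C A t" and g: "g \<in> hom C B t"
  shows "is_product C A B (Dom C p) p q"
  unfolding is_product_def
proof (intro conjI allI impI)
  note pd = pullbackD[OF pb]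
  show "Dom C p \<in> Obj C" "p \<in> hom C (Dom C p) A" "q \<in> hom C (Dom C p) B"
    using pd f g by (auto simp: hom_def)
  fix Z x y assume xy: "x \<in> hom C Z A \<and> y \<in> hom C Z B"
  have "f \<cdot> x \<in> hom C Z t" "g \<cdot> y \<in> hom C Z t" using xy f g comp_hom by blast+
  then have "f \<cdot> x = g \<cdot> y" using t hom_Obj unfolding is_terminal_def by metis
  then obtain h where h: "h \<in> hom C Z (Dom C p)" "p \<cdot> h = x" "q \<cdot> h = y"
    using pullback_factor[OF pb] xy f g by (metis homD(2))
  then show "\<exists>!h. h \<in> hom C Z (Dom C p) \<and> p \<cdot> h = x \<and> q \<cdot> h = y"
    using pullback_unique[OF pb] by metis
qed

lemma jointly_monicD:
  assumes "jointly_monic C r1 r2" "x \<in> hom C W (Dom C r1)" "y \<in> hom C W (Dom C r1)"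
    "r1 \<cdot> x = r1 \<cdot> y" "r2 \<cdot> x = r2 \<cdot> y"
  shows "x = y"
proof -
  have "x \<in> Arr C \<and> y \<in> Arr C \<and> Cod C x = Dom C r1 \<and> Cod C y = Dom C r1 \<and>
      Dom C x = Dom C y \<and> r1 \<cdot> x = r1 \<cdot> y \<and> r2 \<cdot> x = r2 \<cdot> y"
    using assms(2-) by (simp add: hom_def)
  then show ?thesis using assms(1) unfolding jointly_monic_def by blast
qed

lemma jointly_monicI:
  "(\<And>W x y. x \<in> hom C W (Dom C r1) \<Longrightarrow> y \<in> hom C W (Dom C r1) \<Longrightarrow> r1 \<cdot> x = r1 \<cdot> y \<Longrightarrow>
     r2 \<cdot> x = r2 \<cdot> y \<Longrightarrow> x = y) \<Longrightarrow> jointly_monic C r1 r2"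
  unfolding jointly_monic_def hom_def by (intro allI impI) (elim conjE, blast)

lemma jointly_monic_iff_pairing_mono:
  assumes P: "is_product C Z1 Z2 P t1 t2" and r: "r1 \<in> hom C R Z1" "r2 \<in> hom C R Z2"
    and mu: "mu \<in> hom C R P" "t1 \<cdot> mu = r1" "t2 \<cdot> mu = r2"
  shows "jointly_monic C r1 r2 \<longleftrightarrow> is_mono C mu"
proof -
  note pd = productD[OF P]
  have comp: "t1 \<cdot> (mu \<cdot> x) = r1 \<cdot> x" "t2 \<cdot> (mu \<cdot> x) = r2 \<cdot> x" if "x \<in> hom C W R" for W x
    using that mu pd by (auto simp: hom_def comp_reassoc)
  show ?thesis
  proof
    assume jm: "jointly_monic C r1 r2"
    show "is_mono C mu"
    proof (rule monoI)
      show "mu \<in> Arr C" using mu by (simp add: hom_def)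
      fix W x y assume x: "x \<in> hom C W (Dom C mu)" and y: "y \<in> hom C W (Dom C mu)" and e: "mu \<cdot> x = mu \<cdot> y"
      then show "x = y"
        using jointly_monicD[OF jm] comp[of x W] comp[of y W] mu r by (auto simp: hom_def)
    qed
  next
    assume m: "is_mono C mu"
    show "jointly_monic C r1 r2"
    proof (rule jointly_monicI)
      fix W x y assume x: "x \<in> hom C W (Dom C r1)" and y: "y \<in> hom C W (Dom C r1)"
        and e: "r1 \<cdot> x = r1 \<cdot> y" "r2 \<cdot> x = r2 \<cdot> y"
      have "mu \<cdot> x = mu \<cdot> y"
        by (rule product_unique[OF P]) (use x y e mu r comp in \<open>auto simp: hom_def\<close>)
      then show "x = y" using monoD[OF m] x y mu r by (auto simp: hom_def)
    qed
  qed
qed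

lemma equiv_relI:
  assumes r: "r1 \<in> hom C R Z" "r2 \<in> hom C R Z" and jm: "jointly_monic C r1 r2"
    and d: "d \<in> hom C Z R" "r1 \<cdot> d = Id C Z" "r2 \<cdot> d = Id C Z"
    and s: "s \<in> hom C R R" "r1 \<cdot> s = r2" "r2 \<cdot> s = r1"
    and t: "\<And>p q. is_pullback C r2 r1 p q \<Longrightarrow>
      \<exists>t \<in> hom C (Dom C p) R. r1 \<cdot> t = r1 \<cdot> p \<and> r2 \<cdot> t = r2 \<cdot> q"
  shows "equiv_rel C Z r1 r2"
proof -
  have R: "Dom C r1 = R" using r by (simp add: hom_def)
  show ?thesis unfolding equiv_rel_def
  proof (intro conjI allI impI)
    show "r1 \<in> hom C (Dom C r1) Z" "r2 \<in> hom C (Dom C r1) Z" using r R by simp_all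
    show "\<And>x y. x \<in> Arr C \<and> y \<in> Arr C \<and> Cod C x = Dom C r1 \<and> Cod C y = Dom C r1 \<and> Dom C x = Dom C y \<and>
      r1 \<cdot> x = r1 \<cdot> y \<and> r2 \<cdot> x = r2 \<cdot> y \<Longrightarrow> x = y"
      using jm unfolding jointly_monic_def by blast
    show "\<exists>d\<in>hom C Z (Dom C r1). r1 \<cdot> d = Id C Z \<and> r2 \<cdot> d = Id C Z" using d R by blast
    show "\<exists>s\<in>hom C (Dom C r1) (Dom C r1). r1 \<cdot> s = r2 \<and> r2 \<cdot> s = r1" using s R by blast
    fix p q assume "is_pullback C r2 r1 p q"
    then show "\<exists>t\<in>hom C (Dom C p) (Dom C r1). r1 \<cdot> t = r1 \<cdot> p \<and> r2 \<cdot> t = r2 \<cdot> q" using t R by simp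
  qed
qed

lemma equiv_relD:
  assumes "equiv_rel C Z r1 r2"
  shows "r1 \<in> hom C (Dom C r1) Z" "r2 \<in> hom C (Dom C r1) Z" "jointly_monic C r1 r2"
    "\<exists>d\<in>hom C Z (Dom C r1). r1 \<cdot> d = Id C Z \<and> r2 \<cdot> d = Id C Z"
proof -
  have "r1 \<in> hom C (Dom C r1) Z \<and> r2 \<in> hom C (Dom C r1) Z \<and> jointly_monic C r1 r2 \<and>
      (\<exists>d\<in>hom C Z (Dom C r1). r1 \<cdot> d = Id C Z \<and> r2 \<cdot> d = Id C Z)"
    using assms unfolding equiv_rel_def jointly_monic_def by (elim conjE) (intro conjI; assumption)
  then show "r1 \<in> hom C (Dom C r1) Z" "r2 \<in> hom C (Dom C r1) Z" "jointly_monic C r1 r2"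
    "\<exists>d\<in>hom C Z (Dom C r1). r1 \<cdot> d = Id C Z \<and> r2 \<cdot> d = Id C Z" by simp_all
qed

lemma protosplit_monoI:
  "is_kernel C m a \<Longrightarrow> b \<in> hom C (Cod C a) (Dom C a) \<Longrightarrow> a \<cdot> b = Id C (Cod C a) \<Longrightarrow> protosplit_mono C m"
  unfolding protosplit_mono_def by blast

lemma bourn_normalI:
  "is_mono C m \<Longrightarrow> equiv_rel C (Cod C m) r1 r2 \<Longrightarrow> is_product C (Dom C m) (Dom C m) P \<pi>1 \<pi>2 \<Longrightarrow>
   mt \<in> hom C P (Dom C r1) \<Longrightarrow> r1 \<cdot> mt = m \<cdot> \<pi>1 \<Longrightarrow> r2 \<cdot> mt = m \<cdot> \<pi>2 \<Longrightarrow>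
   is_pullback C r1 m mt \<pi>1 \<Longrightarrow> bourn_normal C m"
  unfolding bourn_normal_def by blast

lemma bourn_normalE:
  assumes "bourn_normal C m"
  obtains r1 r2 P \<pi>1 \<pi>2 mt where "is_mono C m" "equiv_rel C (Cod C m) r1 r2"
    "is_product C (Dom C m) (Dom C m) P \<pi>1 \<pi>2" "mt \<in> hom C P (Dom C r1)"
    "r1 \<cdot> mt = m \<cdot> \<pi>1" "r2 \<cdot> mt = m \<cdot> \<pi>2" "is_pullback C r1 m mt \<pi>1"
  using assms unfolding bourn_normal_def by blast

end

section \<open>Zero morphisms\<close>

locale pointed_categ = categ +
  assumes pointed: "pointed C"
begin

definition zero_obj where "zero_obj = (SOME z. is_zero_obj C z)"

definition from_zero where "from_zero b = (THE f. f \<in> hom C zero_obj b)"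

definition to_zero where "to_zero a = (THE f. f \<in> hom C a zero_obj)"

definition zero_map where "zero_map a b = from_zero b \<cdot> to_zero a"

lemma zero_obj: "is_zero_obj C zero_obj"
  unfolding zero_obj_def using pointed pointed_def someI_ex by metis

lemma zero_obj_Obj [simp]: "zero_obj \<in> Obj C"
  using zero_obj unfolding is_zero_obj_def is_initial_def by blast

lemma from_zero_hom: "b \<in> Obj C \<Longrightarrow> from_zero b \<in> hom C zero_obj b"
  unfolding from_zero_def using zero_obj unfolding is_zero_obj_def is_initial_def by (metis theI')

lemma from_zero_unique: "f \<in> hom C zero_obj b \<Longrightarrow> f = from_zero b"
  using from_zero_hom hom_Obj zero_obj unfolding is_zero_obj_def is_initial_def by metis

lemma to_zero_hom: "a \<in> Obj C \<Longrightarrow> to_zero a \<in> hom C a zero_obj"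
  unfolding to_zero_def using zero_obj unfolding is_zero_obj_def is_terminal_def by (metis theI')

lemma to_zero_unique: "f \<in> hom C a zero_obj \<Longrightarrow> f = to_zero a"
  using to_zero_hom hom_Obj zero_obj unfolding is_zero_obj_def is_terminal_def by metis

lemma from_zero_simps [simp]:
  "b \<in> Obj C \<Longrightarrow> from_zero b \<in> Arr C" "b \<in> Obj C \<Longrightarrow> Dom C (from_zero b) = zero_obj"
  "b \<in> Obj C \<Longrightarrow> Cod C (from_zero b) = b"
  using from_zero_hom homD by metis+

lemma to_zero_simps [simp]:
  "a \<in> Obj C \<Longrightarrow> to_zero a \<in> Arr C" "a \<in> Obj C \<Longrightarrow> Dom C (to_zero a) = a"
  "a \<in> Obj C \<Longrightarrow> Cod C (to_zero a) = zero_obj"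
  using to_zero_hom homD by metis+

lemma zero_map_hom: "a \<in> Obj C \<Longrightarrow> b \<in> Obj C \<Longrightarrow> zero_map a b \<in> hom C a b"
  unfolding zero_map_def using from_zero_hom to_zero_hom comp_hom by blast

lemma zero_map_simps [simp]:
  "a \<in> Obj C \<Longrightarrow> b \<in> Obj C \<Longrightarrow> zero_map a b \<in> Arr C"
  "a \<in> Obj C \<Longrightarrow> b \<in> Obj C \<Longrightarrow> Dom C (zero_map a b) = a"
  "a \<in> Obj C \<Longrightarrow> b \<in> Obj C \<Longrightarrow> Cod C (zero_map a b) = b"
  using zero_map_hom homD by metis+

lemma zero_map_comp [simp]:
  assumes "f \<in> Arr C" "Cod C f = b" "c \<in> Obj C"
  shows "zero_map b c \<cdot> f = zero_map (Dom C f) c"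
proof -
  have "zero_map b c \<cdot> f = from_zero c \<cdot> (to_zero b \<cdot> f)"
    unfolding zero_map_def using assms Cod_Obj[of f] by simp
  also have "to_zero b \<cdot> f = to_zero (Dom C f)"
    using assms to_zero_hom Cod_Obj comp_hom homI to_zero_unique by metis
  finally show ?thesis unfolding zero_map_def .
qed

lemma comp_zero_map [simp]:
  assumes "f \<in> Arr C" "Dom C f = b" "a \<in> Obj C"
  shows "f \<cdot> zero_map a b = zero_map a (Cod C f)"
proof -
  have "f \<cdot> zero_map a b = (f \<cdot> from_zero b) \<cdot> to_zero a"
    unfolding zero_map_def using assms Dom_Obj[of f] by simp
  also have "f \<cdot> from_zero b = from_zero (Cod C f)"
    using assms from_zero_hom Dom_Obj comp_hom homI from_zero_unique by metis
  finally show ?thesis unfolding zero_map_def .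
qed

lemma comp_through_zero_obj:
  assumes z: "is_zero_obj C z" and g: "g \<in> hom C a z" and h: "h \<in> hom C z b"
  shows "h \<cdot> g = zero_map a b"
proof -
  have zo: "z \<in> Obj C" using z unfolding is_zero_obj_def is_initial_def by blast
  obtain u where u: "u \<in> hom C z zero_obj" using to_zero_hom zo by blast
  obtain w where w: "w \<in> hom C zero_obj z" using from_zero_hom zo by blast
  have wu: "w \<cdot> u = Id C z"
    using z zo comp_hom[OF u w] Id_hom unfolding is_zero_obj_def is_initial_def by metis
  have "h \<cdot> g = h \<cdot> (w \<cdot> u) \<cdot> g" using wu g h by (simp add: hom_def)
  also have "\<dots> = (h \<cdot> w) \<cdot> (u \<cdot> g)" using g h u w by (simp add: hom_def)
  also have "h \<cdot> w = from_zero b" using from_zero_unique comp_hom w h by blast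
  also have "u \<cdot> g = to_zero a" using to_zero_unique comp_hom u g by blast
  finally show ?thesis unfolding zero_map_def .
qed

lemma zero_arr_iff: "zero_arr C f \<longleftrightarrow> f \<in> Arr C \<and> f = zero_map (Dom C f) (Cod C f)"
proof
  assume "zero_arr C f"
  then show "f \<in> Arr C \<and> f = zero_map (Dom C f) (Cod C f)"
    unfolding zero_arr_def using comp_through_zero_obj by blast
next
  assume "f \<in> Arr C \<and> f = zero_map (Dom C f) (Cod C f)"
  then show "zero_arr C f"
    unfolding zero_arr_def zero_map_def using zero_obj from_zero_hom to_zero_hom Dom_Obj Cod_Obj
    by blast
qed

lemma zero_arrI: "f \<in> hom C a b \<Longrightarrow> f = zero_map a b \<Longrightarrow> zero_arr C f"
  using zero_arr_iff homD by metis

lemma zero_arrD: "zero_arr C f \<Longrightarrow> f \<in> hom C a b \<Longrightarrow> f = zero_map a b"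
  using zero_arr_iff homD by metis

lemma hom_to_zero_obj: "is_zero_obj C z \<Longrightarrow> f \<in> hom C a z \<Longrightarrow> f = zero_map a z"
  using comp_through_zero_obj Id_hom hom_Obj by (metis homD comp_Id_left)

lemma commute_IdI:
  assumes g: "g \<in> hom C B X" and Q: "is_product C B X Q q1 q2"
    and l: "l \<in> hom C B Q" "q1 \<cdot> l = Id C B" "q2 \<cdot> l = zero_map B X"
    and r: "r \<in> hom C X Q" "q1 \<cdot> r = zero_map X B" "q2 \<cdot> r = Id C X"
    and \<phi>: "\<phi> \<in> hom C Q X" "\<phi> \<cdot> l = g" "\<phi> \<cdot> r = Id C X"
  shows "commute C g (Id C X)"
proof -
  note qd = productD[OF Q]
  have X: "X \<in> Obj C" using g hom_Obj by blast
  have z: "zero_arr C (q2 \<cdot> l)" "zero_arr C (q1 \<cdot> r)"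
    using zero_arrI[OF comp_hom[OF l(1) qd(3)] l(3)] zero_arrI[OF comp_hom[OF r(1) qd(2)] r(2)] .
  have eqs: "g \<in> Arr C" "Dom C g = B" "Cod C g = X" "Id C X \<in> Arr C" "Dom C (Id C X) = X" "Cod C (Id C X) = X"
    using g X by (simp_all add: hom_def)
  show ?thesis
    unfolding commute_def eqs using eqs(1,4) Q l(1,2) r(1,3) z \<phi> by blast
qed

lemma commute_IdE:
  assumes "commute C g (Id C X)" "X \<in> Obj C"
  obtains Q q1 q2 l r \<phi> where "is_product C (Dom C g) X Q q1 q2"
    "l \<in> hom C (Dom C g) Q" "q1 \<cdot> l = Id C (Dom C g)" "q2 \<cdot> l = zero_map (Dom C g) X"
    "r \<in> hom C X Q" "q1 \<cdot> r = zero_map X (Dom C g)" "q2 \<cdot> r = Id C X"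
    "\<phi> \<in> hom C Q X" "\<phi> \<cdot> l = g" "\<phi> \<cdot> r = Id C X"
proof -
  have eqs: "Dom C (Id C X) = X" "Cod C (Id C X) = X" using assms(2) by simp_all
  obtain Q q1 q2 l r \<phi> where cd: "is_product C (Dom C g) X Q q1 q2"
      "l \<in> hom C (Dom C g) Q" "q1 \<cdot> l = Id C (Dom C g)" "zero_arr C (q2 \<cdot> l)"
      "r \<in> hom C X Q" "zero_arr C (q1 \<cdot> r)" "q2 \<cdot> r = Id C X"
      "\<phi> \<in> hom C Q X" "\<phi> \<cdot> l = g" "\<phi> \<cdot> r = Id C X"
    using assms(1) unfolding commute_def eqs by blast
  note qd = productD[OF cd(1)]
  have "q2 \<cdot> l = zero_map (Dom C g) X" "q1 \<cdot> r = zero_map X (Dom C g)"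
    using zero_arrD[OF cd(4) comp_hom[OF cd(2) qd(3)]] zero_arrD[OF cd(6) comp_hom[OF cd(5) qd(2)]] .
  then show ?thesis using that cd by blast
qed

end

section \<open>Finite limits\<close>

locale lex_categ = categ +
  assumes finitely_complete: "finitely_complete C"
begin

lemma pullback_exists:
  assumes "f \<in> hom C A Z" "g \<in> hom C B Z"
  obtains P p q where "is_pullback C f g p q" "p \<in> hom C P A" "q \<in> hom C P B"
proof -
  have "f \<in> Arr C \<and> g \<in> Arr C \<and> Cod C f = Cod C g" using assms by (simp add: hom_def)
  then obtain p q where pq: "is_pullback C f g p q"
    using finitely_complete unfolding finitely_complete_def by blast
  then show ?thesis using that pullbackD[OF pq] assms by (auto simp: hom_def)
qed

lemma product_exists:
  assumes "A \<in> Obj C" "B \<in> Obj C"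
  obtains P p1 p2 where "is_product C A B P p1 p2"
proof -
  obtain t where t: "is_terminal C t" using finitely_complete unfolding finitely_complete_def by blast
  then obtain f g where "f \<in> hom C A t" "g \<in> hom C B t"
    using assms unfolding is_terminal_def by blast
  with pullback_exists obtain p q where "is_pullback C f g p q" by metis
  then show ?thesis using that pullback_over_terminal_is_product t \<open>f \<in> hom C A t\<close> \<open>g \<in> hom C B t\<close>
    by blast
qed

lemma joint_pullback_exists:
  assumes f: "f1 \<in> hom C A Z1" "f2 \<in> hom C A Z2" and g: "g1 \<in> hom C B Z1" "g2 \<in> hom C B Z2"
  obtains S s1 s2 where "s1 \<in> hom C S A" "s2 \<in> hom C S B" "f1 \<cdot> s1 = g1 \<cdot> s2" "f2 \<cdot> s1 = g2 \<cdot> s2"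
    "jointly_monic C s1 s2"
    "\<And>W x y. x \<in> hom C W A \<Longrightarrow> y \<in> hom C W B \<Longrightarrow> f1 \<cdot> x = g1 \<cdot> y \<Longrightarrow> f2 \<cdot> x = g2 \<cdot> y \<Longrightarrow>
      \<exists>h \<in> hom C W S. s1 \<cdot> h = x \<and> s2 \<cdot> h = y"
proof -
  obtain Q t1 t2 where Q: "is_product C Z1 Z2 Q t1 t2" using product_exists f hom_Obj by metis
  note qd = productD[OF Q]
  obtain f' where f': "f' \<in> hom C A Q" "t1 \<cdot> f' = f1" "t2 \<cdot> f' = f2" using product_factor[OF Q f] by blast
  obtain g' where g': "g' \<in> hom C B Q" "t1 \<cdot> g' = g1" "t2 \<cdot> g' = g2" using product_factor[OF Q g] by blast
  obtain S s1 s2 where pb: "is_pullback C f' g' s1 s2" "s1 \<in> hom C S A" "s2 \<in> hom C S B"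
    using pullback_exists[OF f'(1) g'(1)] by blast
  note h = homD[OF qd(2)] homD[OF qd(3)] homD[OF f'(1)] homD[OF g'(1)] homD[OF pb(2)] homD[OF pb(3)]
  have comp: "t1 \<cdot> (f' \<cdot> x) = f1 \<cdot> x" "t2 \<cdot> (f' \<cdot> x) = f2 \<cdot> x"
    "t1 \<cdot> (g' \<cdot> y) = g1 \<cdot> y" "t2 \<cdot> (g' \<cdot> y) = g2 \<cdot> y"
    if "x \<in> hom C W A" "y \<in> hom C W B" for W x y
    using that h by (simp_all add: hom_def comp_reassoc[OF f'(2)] comp_reassoc[OF f'(3)]
        comp_reassoc[OF g'(2)] comp_reassoc[OF g'(3)])
  have sq: "f' \<cdot> s1 = g' \<cdot> s2" using pullbackD(3)[OF pb(1)] .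
  have "f1 \<cdot> s1 = g1 \<cdot> s2" "f2 \<cdot> s1 = g2 \<cdot> s2" using comp[OF pb(2,3)] sq by metis+
  moreover have "jointly_monic C s1 s2"
    by (rule jointly_monicI) (rule pullback_unique[OF pb(1)], assumption+)
  moreover have "\<exists>h \<in> hom C W S. s1 \<cdot> h = x \<and> s2 \<cdot> h = y"
    if xy: "x \<in> hom C W A" "y \<in> hom C W B" "f1 \<cdot> x = g1 \<cdot> y" "f2 \<cdot> x = g2 \<cdot> y" for W x y
  proof -
    have "f' \<cdot> x = g' \<cdot> y"
      by (rule product_unique[OF Q, of _ W]) (use xy comp[OF xy(1,2)] f'(1) g'(1) comp_hom in auto)
    then show ?thesis using pullback_factor[OF pb(1)] xy(1,2) h by (metis homD(2))
  qed
  ultimately show ?thesis using that pb(2,3) by blast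
qed

end

section \<open>Kernels\<close>

locale pointed_lex_categ = pointed_categ + lex_categ
begin

lemma kernelD:
  assumes "is_kernel C k a"
  shows "k \<in> hom C (Dom C k) (Dom C a)" "a \<in> Arr C" "a \<cdot> k = zero_map (Dom C k) (Cod C a)"
proof -
  have kp: "k \<in> Arr C" "a \<in> Arr C" "Cod C k = Dom C a" "zero_arr C (a \<cdot> k)"
    using assms unfolding is_kernel_def by blast+
  then show "k \<in> hom C (Dom C k) (Dom C a)" "a \<in> Arr C" by (simp_all add: hom_def)
  show "a \<cdot> k = zero_map (Dom C k) (Cod C a)" using kp zero_arrD comp_in_hom by simp
qed

lemma kernel_universal:
  assumes k: "is_kernel C k a" and f: "f \<in> hom C W (Dom C a)" "a \<cdot> f = zero_map W (Cod C a)"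
  shows "\<exists>!g. g \<in> hom C W (Dom C k) \<and> k \<cdot> g = f"
proof -
  have H: "\<forall>f. f \<in> Arr C \<and> Cod C f = Dom C a \<and> zero_arr C (a \<cdot> f) \<longrightarrow>
      (\<exists>!g. g \<in> hom C (Dom C f) (Dom C k) \<and> k \<cdot> g = f)"
    using k unfolding is_kernel_def by (elim conjE)
  have "zero_arr C (a \<cdot> f)"
    using f kernelD[OF k] hom_Obj by (intro zero_arrI[of _ W "Cod C a"]) (auto simp: hom_def)
  then have "f \<in> Arr C \<and> Cod C f = Dom C a \<and> zero_arr C (a \<cdot> f)" "Dom C f = W"
    using f by (simp_all add: hom_def)
  then show ?thesis using H by metis
qed

lemma kernel_factor:
  assumes "is_kernel C k a" "f \<in> hom C W (Dom C a)" "a \<cdot> f = zero_map W (Cod C a)"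
  obtains g where "g \<in> hom C W (Dom C k)" "k \<cdot> g = f"
  using ex1_implies_ex[OF kernel_universal[OF assms]] by blast

lemma kernel_mono:
  assumes k: "is_kernel C k a"
  shows "is_mono C k"
proof (rule monoI)
  note kd = kernelD[OF k]
  show "k \<in> Arr C" using kd by (simp add: hom_def)
  fix W g h assume g: "g \<in> hom C W (Dom C k)" and h: "h \<in> hom C W (Dom C k)" and e: "k \<cdot> g = k \<cdot> h"
  have "k \<cdot> g \<in> hom C W (Dom C a)" "a \<cdot> (k \<cdot> g) = zero_map W (Cod C a)"
    using kd g hom_Obj by (auto simp: hom_def comp_reassoc[OF kd(3)])
  from kernel_universal[OF k this] show "g = h"
    by (rule ex1_unique) (use g h e in simp_all)
qed

lemma kernelI:
  assumes "k \<in> hom C K A" "a \<in> hom C A B" "a \<cdot> k = zero_map K B"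
    and factor: "\<And>W f. f \<in> hom C W A \<Longrightarrow> a \<cdot> f = zero_map W B \<Longrightarrow> \<exists>g \<in> hom C W K. k \<cdot> g = f"
    and unique: "\<And>W g h. g \<in> hom C W K \<Longrightarrow> h \<in> hom C W K \<Longrightarrow> k \<cdot> g = k \<cdot> h \<Longrightarrow> g = h"
  shows "is_kernel C k a"
  unfolding is_kernel_def
proof (intro conjI allI impI)
  show "zero_arr C (a \<cdot> k)" using assms(1-3) by (intro zero_arrI comp_hom) simp_all
  fix f assume f: "f \<in> Arr C \<and> Cod C f = Dom C a \<and> zero_arr C (a \<cdot> f)"
  then have fh: "f \<in> hom C (Dom C f) A" using assms(1-3) by (simp add: hom_def)
  have "a \<cdot> f = zero_map (Dom C f) B" using f zero_arrD comp_hom[OF fh assms(2)] by blast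
  then obtain g where g: "g \<in> hom C (Dom C f) K" "k \<cdot> g = f" using factor fh by blast
  moreover have "Dom C k = K" using assms(1) by (simp add: hom_def)
  ultimately show "\<exists>!g. g \<in> hom C (Dom C f) (Dom C k) \<and> k \<cdot> g = f"
    using unique by metis
qed (use assms(1-3) in \<open>simp_all add: hom_def\<close>)

lemma kernel_exists:
  assumes a: "a \<in> hom C A B"
  obtains K k where "k \<in> hom C K A" "is_kernel C k a"
proof -
  have B: "B \<in> Obj C" using a hom_Obj by blast
  obtain K k t where pb: "is_pullback C a (from_zero B) k t" "k \<in> hom C K A" "t \<in> hom C K zero_obj"
    using pullback_exists[OF a from_zero_hom[OF B]] by blast
  note pd = pullbackD[OF pb(1)]
  have "is_kernel C k a"
  proof (rule kernelI[OF pb(2) a])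
    show "a \<cdot> k = zero_map K B"
      using pd comp_through_zero_obj[OF zero_obj pb(3) from_zero_hom[OF B]] by simp
  next
    fix W f assume f: "f \<in> hom C W A" "a \<cdot> f = zero_map W B"
    have W: "W \<in> Obj C" using f hom_Obj by blast
    have "f \<in> hom C W (Dom C a)" "to_zero W \<in> hom C W (Dom C (from_zero B))" "a \<cdot> f = from_zero B \<cdot> to_zero W"
      using f a to_zero_hom[OF W] from_zero_hom[OF B] unfolding zero_map_def by (auto simp: hom_def)
    from pullback_factor[OF pb(1) this] obtain h where "h \<in> hom C W (Dom C k)" "k \<cdot> h = f" .
    then show "\<exists>g\<in>hom C W K. k \<cdot> g = f" using pb(2) by (auto simp: hom_def)
  next
    fix W g h assume g: "g \<in> hom C W K" and h: "h \<in> hom C W K" and e: "k \<cdot> g = k \<cdot> h"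
    have "t \<cdot> g = t \<cdot> h" using g h pb(3) to_zero_unique comp_hom by metis
    moreover have "g \<in> hom C W (Dom C k)" "h \<in> hom C W (Dom C k)" using g h pb(2) by (auto simp: hom_def)
    ultimately show "g = h" using pullback_unique[OF pb(1)] e by blast
  qed
  then show ?thesis using that pb by blast
qed

lemma kernel_pullback:
  assumes pb: "is_pullback C f g a b" and k: "is_kernel C \<kappa> f"
  obtains kP where "kP \<in> hom C (Dom C \<kappa>) (Dom C a)" "a \<cdot> kP = \<kappa>"
    "b \<cdot> kP = zero_map (Dom C \<kappa>) (Dom C g)" "is_kernel C kP b"
proof -
  note pd = pullbackD[OF pb] and kd = kernelD[OF k]
  define K where "K = Dom C \<kappa>"
  have bh: "b \<in> hom C (Dom C a) (Dom C g)" using pd by simp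
  have ob: "K \<in> Obj C" "Dom C g \<in> Obj C" using kd pd hom_Obj unfolding K_def by (auto simp: hom_def)
  have "f \<cdot> \<kappa> = g \<cdot> zero_map K (Dom C g)" using kd pd ob unfolding K_def by (simp add: hom_def)
  then obtain kP where kP: "kP \<in> hom C K (Dom C a)" "a \<cdot> kP = \<kappa>" "b \<cdot> kP = zero_map K (Dom C g)"
    using pullback_factor[OF pb] kd ob zero_map_hom unfolding K_def by (metis homD(1,2,3) pd(5) homI)
  have "is_kernel C kP b"
  proof (rule kernelI[OF kP(1) bh kP(3)])
    fix W h assume h: "h \<in> hom C W (Dom C a)" "b \<cdot> h = zero_map W (Dom C g)"
    have W: "W \<in> Obj C" using h hom_Obj by blast
    have "f \<cdot> (a \<cdot> h) = zero_map W (Cod C f)" "a \<cdot> h \<in> hom C W (Dom C f)"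
      using h pd W by (auto simp: hom_def comp_reassoc[OF pd(3)])
    then obtain x where x: "x \<in> hom C W K" "\<kappa> \<cdot> x = a \<cdot> h" using kernel_factor[OF k] K_def by metis
    have "kP \<cdot> x = h"
      by (rule pullback_unique[OF pb, of _ W])
        (use x h kP pd ob W in \<open>auto simp: hom_def comp_reassoc[OF kP(2)] comp_reassoc[OF kP(3)]\<close>)
    then show "\<exists>x\<in>hom C W K. kP \<cdot> x = h" using x by blast
  next
    fix W x y assume x: "x \<in> hom C W K" and y: "y \<in> hom C W K" and e: "kP \<cdot> x = kP \<cdot> y"
    have "\<kappa> \<cdot> x = \<kappa> \<cdot> y"
      using e x y kP pd by (metis comp_reassoc[OF kP(2)] homD)
    then show "x = y" using monoD[OF kernel_mono[OF k]] x y K_def by blast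
  qed
  then show ?thesis using that kP K_def by blast
qed

lemma kernel_through_mono:
  assumes k: "is_kernel C \<kappa> \<alpha>" and e: "is_mono C e" "e \<in> hom C E (Dom C \<alpha>)"
    and \<kappa>': "\<kappa>' \<in> hom C (Dom C \<kappa>) E" "e \<cdot> \<kappa>' = \<kappa>"
  shows "is_kernel C \<kappa>' (\<alpha> \<cdot> e)"
proof -
  note kd = kernelD[OF k]
  note h = homD[OF e(2)] homD[OF \<kappa>'(1)] homD[OF kd(1)]
  have ae: "\<alpha> \<cdot> e \<in> hom C E (Cod C \<alpha>)" using h kd(2) by (simp add: hom_def)
  show ?thesis
  proof (rule kernelI[OF \<kappa>'(1) ae])
    show "(\<alpha> \<cdot> e) \<cdot> \<kappa>' = zero_map (Dom C \<kappa>) (Cod C \<alpha>)" using h kd(2,3) \<kappa>'(2) by simp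
  next
    fix W f assume f: "f \<in> hom C W E" "(\<alpha> \<cdot> e) \<cdot> f = zero_map W (Cod C \<alpha>)"
    have "e \<cdot> f \<in> hom C W (Dom C \<alpha>)" "\<alpha> \<cdot> (e \<cdot> f) = zero_map W (Cod C \<alpha>)"
      using f h kd(2) by (auto simp: hom_def)
    then obtain x where x: "x \<in> hom C W (Dom C \<kappa>)" "\<kappa> \<cdot> x = e \<cdot> f" using kernel_factor[OF k] by blast
    have "e \<cdot> (\<kappa>' \<cdot> x) = e \<cdot> f" using x h by (simp add: hom_def comp_reassoc[OF \<kappa>'(2)])
    then have "\<kappa>' \<cdot> x = f" using monoD[OF e(1)] x f(1) h comp_hom \<kappa>'(1) by metis
    then show "\<exists>x\<in>hom C W (Dom C \<kappa>). \<kappa>' \<cdot> x = f" using x(1) by blast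
  next
    fix W g g' assume g: "g \<in> hom C W (Dom C \<kappa>)" "g' \<in> hom C W (Dom C \<kappa>)" and eq: "\<kappa>' \<cdot> g = \<kappa>' \<cdot> g'"
    have "\<kappa> \<cdot> g = \<kappa> \<cdot> g'" using eq g h by (metis homD comp_reassoc[OF \<kappa>'(2)])
    then show "g = g'" using monoD[OF kernel_mono[OF k]] g by blast
  qed
qed

lemma zero_map_kernel:
  assumes a: "a \<in> hom C A B"
    and trivial: "\<And>W g. g \<in> hom C W A \<Longrightarrow> a \<cdot> g = zero_map W B \<Longrightarrow> g = zero_map W A"
  shows "is_kernel C (zero_map zero_obj A) a"
proof -
  have ob: "A \<in> Obj C" "B \<in> Obj C" using a hom_Obj by blast+
  show ?thesis
  proof (rule kernelI[OF zero_map_hom[OF zero_obj_Obj ob(1)] a])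
    show "a \<cdot> zero_map zero_obj A = zero_map zero_obj B" using a ob by (simp add: hom_def)
  next
    fix W g assume g: "g \<in> hom C W A" "a \<cdot> g = zero_map W B"
    have W: "W \<in> Obj C" using g hom_Obj by blast
    have "g = zero_map zero_obj A \<cdot> to_zero W" using trivial[OF g] ob W by simp
    then show "\<exists>x\<in>hom C W zero_obj. zero_map zero_obj A \<cdot> x = g" using to_zero_hom[OF W] by blast
  next
    fix W g h assume "g \<in> hom C W zero_obj" "h \<in> hom C W zero_obj"
    then show "g = h" using to_zero_unique by metis
  qed
qed

lemma Id_kernel:
  assumes Y: "Y \<in> Obj C"
  shows "is_kernel C (Id C Y) (to_zero Y)"
proof (rule kernelI[OF Id_hom[OF Y] to_zero_hom[OF Y]])
  show "to_zero Y \<cdot> Id C Y = zero_map Y zero_obj"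
    using hom_to_zero_obj[OF zero_obj to_zero_hom[OF Y]] Y by simp
qed (auto simp: hom_def)

lemma kernel_pullback_kernel_pair:
  assumes k: "is_kernel C m a" and pb: "is_pullback C a a r1 r2"
    and P: "is_product C (Dom C m) (Dom C m) P p1 p2"
    and mt: "mt \<in> hom C P (Dom C r1)" "r1 \<cdot> mt = m \<cdot> p1" "r2 \<cdot> mt = m \<cdot> p2"
  shows "is_pullback C r1 m mt p1"
proof -
  note kd = kernelD[OF k] and pd = pullbackD[OF pb] and qd = productD[OF P]
  define S where "S = Dom C m"
  define R where "R = Dom C r1"
  have hs: "m \<in> hom C S (Dom C a)" "r1 \<in> hom C R (Dom C a)" "r2 \<in> hom C R (Dom C a)"
    "p1 \<in> hom C P S" "p2 \<in> hom C P S" "mt \<in> hom C P R"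
    using kd pd qd mt unfolding S_def R_def by simp_all
  note h = homD[OF hs(1)] homD[OF hs(2)] homD[OF hs(3)] homD[OF hs(4)] homD[OF hs(5)] homD[OF hs(6)]
  show ?thesis
  proof (rule pullbackI[OF hs(2,1,6,4) mt(2)])
    fix W x y assume x: "x \<in> hom C W R" and y: "y \<in> hom C W S" and e: "r1 \<cdot> x = m \<cdot> y"
    note hx = homD[OF x] homD[OF y]
    have W: "W \<in> Obj C" using x hom_Obj by blast
    have "a \<cdot> (r2 \<cdot> x) = zero_map W (Cod C a)"
      using hx h W e kd(2) by (simp add: comp_reassoc[OF pd(3)[symmetric]] comp_reassoc[OF kd(3)[unfolded S_def[symmetric]]])
    moreover have "r2 \<cdot> x \<in> hom C W (Dom C a)" using hx h by (simp add: hom_def)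
    ultimately obtain y2 where y2: "y2 \<in> hom C W S" "m \<cdot> y2 = r2 \<cdot> x"
      using kernel_factor[OF k, folded S_def] by metis
    obtain g where g: "g \<in> hom C W P" "p1 \<cdot> g = y" "p2 \<cdot> g = y2"
      using product_factor[OF P[folded S_def] y y2(1)] by blast
    note hg = homD[OF g(1)] homD[OF y2(1)]
    have "mt \<cdot> g = x"
    proof (rule pullback_unique[OF pb, of _ W])
      show "mt \<cdot> g \<in> hom C W (Dom C r1)" "x \<in> hom C W (Dom C r1)"
        using hg h x comp_hom[OF g(1) hs(6)] unfolding R_def[symmetric] by simp_all
      show "r1 \<cdot> mt \<cdot> g = r1 \<cdot> x" using hg h e by (simp add: comp_reassoc[OF mt(2)] g(2))
      show "r2 \<cdot> mt \<cdot> g = r2 \<cdot> x" using hg h y2(2) by (simp add: comp_reassoc[OF mt(3)] g(3))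
    qed
    then show "\<exists>h\<in>hom C W P. mt \<cdot> h = x \<and> p1 \<cdot> h = y" using g by blast
  next
    fix W g g' assume g: "g \<in> hom C W P" "g' \<in> hom C W P" and e: "mt \<cdot> g = mt \<cdot> g'" "p1 \<cdot> g = p1 \<cdot> g'"
    note hg = homD[OF g(1)] homD[OF g(2)]
    have "r2 \<cdot> (mt \<cdot> g) = r2 \<cdot> (mt \<cdot> g')" using e by simp
    then have "m \<cdot> (p2 \<cdot> g) = m \<cdot> (p2 \<cdot> g')" using hg h by (simp add: comp_reassoc[OF mt(3)])
    then have "p2 \<cdot> g = p2 \<cdot> g'"
      using monoD[OF kernel_mono[OF k], of "p2 \<cdot> g" W "p2 \<cdot> g'"] comp_hom[OF _ hs(5)] g h
      unfolding S_def[symmetric] by simp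
    then show "g = g'" using product_unique[OF P g] e(2) by simp
  qed
qed

lemma bourn_normal_kernel:
  assumes er: "equiv_rel C Z r1 r2" and P: "is_product C S S P p1 p2"
    and mt: "mt \<in> hom C P (Dom C r1)" "r1 \<cdot> mt = m \<cdot> p1" "r2 \<cdot> mt = m \<cdot> p2"
    and pb: "is_pullback C r1 m mt p1" and m: "m \<in> hom C S Z"
    and d: "d \<in> hom C S P" "p1 \<cdot> d = zero_map S S" "p2 \<cdot> d = Id C S"
  shows "is_kernel C (mt \<cdot> d) r1"
proof -
  note ed = equiv_relD[OF er] and qd = productD[OF P]
  define R where "R = Dom C r1"
  have rh: "r1 \<in> hom C R Z" using ed R_def by simp
  note h = homD[OF rh] homD[OF m] homD[OF qd(2)] homD[OF qd(3)] homD[OF d(1)] homD[OF mt(1)[folded R_def]]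
  have ob: "S \<in> Obj C" "Z \<in> Obj C" using rh m hom_Obj by blast+
  have mdh: "mt \<cdot> d \<in> hom C S R" using h by (simp add: hom_def)
  show ?thesis
  proof (rule kernelI[OF mdh rh])
    show "r1 \<cdot> mt \<cdot> d = zero_map S Z" using h ob by (simp add: comp_reassoc[OF mt(2)] d(2))
  next
    fix W f assume f: "f \<in> hom C W R" "r1 \<cdot> f = zero_map W Z"
    have W: "W \<in> Obj C" using f hom_Obj by blast
    have "r1 \<cdot> f = m \<cdot> zero_map W S" "f \<in> hom C W (Dom C r1)" "zero_map W S \<in> hom C W (Dom C m)"
      using f h W ob zero_map_hom by simp_all
    then obtain g where g: "g \<in> hom C W P" "mt \<cdot> g = f" "p1 \<cdot> g = zero_map W S"
      using pullback_factor[OF pb] h by metis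
    note hg = homD[OF g(1)]
    have "d \<cdot> (p2 \<cdot> g) = g"
      by (rule product_unique[OF P, of _ W])
        (use h hg ob W g(1) in \<open>simp_all add: hom_def comp_reassoc[OF d(2)] comp_reassoc[OF d(3)] g(3)\<close>)
    then have "(mt \<cdot> d) \<cdot> (p2 \<cdot> g) = f" using h hg g(2) by simp
    moreover have "p2 \<cdot> g \<in> hom C W S" using h hg by (simp add: hom_def)
    ultimately show "\<exists>g\<in>hom C W S. (mt \<cdot> d) \<cdot> g = f" by blast
  next
    fix W g g' assume g: "g \<in> hom C W S" "g' \<in> hom C W S" and e: "(mt \<cdot> d) \<cdot> g = (mt \<cdot> d) \<cdot> g'"
    note hg = homD[OF g(1)] homD[OF g(2)]
    have W: "W \<in> Obj C" using g hom_Obj by blast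
    have "d \<cdot> g = d \<cdot> g'"
    proof (rule pullback_unique[OF pb, of _ W])
      show "d \<cdot> g \<in> hom C W (Dom C mt)" "d \<cdot> g' \<in> hom C W (Dom C mt)" using h hg by (simp_all add: hom_def)
      show "mt \<cdot> d \<cdot> g = mt \<cdot> d \<cdot> g'" using e h hg by simp
      show "p1 \<cdot> d \<cdot> g = p1 \<cdot> d \<cdot> g'" using h hg ob W by (simp add: comp_reassoc[OF d(2)])
    qed
    then have "p2 \<cdot> (d \<cdot> g) = p2 \<cdot> (d \<cdot> g')" by simp
    then show "g = g'" using h hg by (simp add: comp_reassoc[OF d(3)])
  qed
qed

end

section \<open>Split extensions\<close>

context pointed_lex_categ
begin

lemma split_extD:
  assumes "split_ext C \<kappa> \<alpha> \<beta>"
  shows "\<alpha> \<in> hom C (Dom C \<alpha>) (Cod C \<alpha>)" "\<beta> \<in> hom C (Cod C \<alpha>) (Dom C \<alpha>)" "\<alpha> \<cdot> \<beta> = Id C (Cod C \<alpha>)"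
    "is_kernel C \<kappa> \<alpha>" "\<kappa> \<in> hom C (Dom C \<kappa>) (Dom C \<alpha>)" "\<alpha> \<cdot> \<kappa> = zero_map (Dom C \<kappa>) (Cod C \<alpha>)"
proof -
  show "\<alpha> \<in> hom C (Dom C \<alpha>) (Cod C \<alpha>)" using assms unfolding split_ext_def by (simp add: hom_def)
  show "\<beta> \<in> hom C (Cod C \<alpha>) (Dom C \<alpha>)" "\<alpha> \<cdot> \<beta> = Id C (Cod C \<alpha>)" "is_kernel C \<kappa> \<alpha>"
    using assms unfolding split_ext_def by simp_all
  then show "\<kappa> \<in> hom C (Dom C \<kappa>) (Dom C \<alpha>)" "\<alpha> \<cdot> \<kappa> = zero_map (Dom C \<kappa>) (Cod C \<alpha>)"
    using kernelD by blast+
qed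

lemma split_extI:
  "\<alpha> \<in> hom C A B \<Longrightarrow> \<beta> \<in> hom C B A \<Longrightarrow> \<alpha> \<cdot> \<beta> = Id C B \<Longrightarrow> is_kernel C \<kappa> \<alpha> \<Longrightarrow> split_ext C \<kappa> \<alpha> \<beta>"
  unfolding split_ext_def by (auto simp: hom_def)

lemma split_ext_morD:
  assumes "split_ext_mor C \<kappa> \<alpha> \<beta> \<kappa>' \<alpha>' \<beta>' v w"
  shows "v \<in> hom C (Dom C \<alpha>) (Dom C \<alpha>')" "w \<in> hom C (Cod C \<alpha>) (Cod C \<alpha>')" "v \<cdot> \<kappa> = \<kappa>'"
    "\<alpha>' \<cdot> v = w \<cdot> \<alpha>" "v \<cdot> \<beta> = \<beta>' \<cdot> w"
  using assms unfolding split_ext_mor_def by simp_all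

lemma split_ext_morI:
  "v \<in> hom C (Dom C \<alpha>) (Dom C \<alpha>') \<Longrightarrow> w \<in> hom C (Cod C \<alpha>) (Cod C \<alpha>') \<Longrightarrow> v \<cdot> \<kappa> = \<kappa>' \<Longrightarrow>
   \<alpha>' \<cdot> v = w \<cdot> \<alpha> \<Longrightarrow> v \<cdot> \<beta> = \<beta>' \<cdot> w \<Longrightarrow> split_ext_mor C \<kappa> \<alpha> \<beta> \<kappa>' \<alpha>' \<beta>' v w"
  unfolding split_ext_mor_def by simp

lemma split_ext_mor_comp:
  assumes s1: "split_ext C \<kappa> \<alpha> \<beta>" and s2: "split_ext C \<kappa>' \<alpha>' \<beta>'" and s3: "split_ext C \<kappa>'' \<alpha>'' \<beta>''"
    and m1: "split_ext_mor C \<kappa> \<alpha> \<beta> \<kappa>' \<alpha>' \<beta>' v w" and m2: "split_ext_mor C \<kappa>' \<alpha>' \<beta>' \<kappa>'' \<alpha>'' \<beta>'' v' w'"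
  shows "split_ext_mor C \<kappa> \<alpha> \<beta> \<kappa>'' \<alpha>'' \<beta>'' (v' \<cdot> v) (w' \<cdot> w)"
proof -
  note a1 = split_extD[OF s1] and a2 = split_extD[OF s2] and a3 = split_extD[OF s3]
  note b1 = split_ext_morD[OF m1] and b2 = split_ext_morD[OF m2]
  show ?thesis
  proof (rule split_ext_morI)
    show "v' \<cdot> v \<in> hom C (Dom C \<alpha>) (Dom C \<alpha>'')" using b1(1) b2(1) comp_hom by blast
    show "w' \<cdot> w \<in> hom C (Cod C \<alpha>) (Cod C \<alpha>'')" using b1(2) b2(2) comp_hom by blast
    show "(v' \<cdot> v) \<cdot> \<kappa> = \<kappa>''" using a1 a2 a3 b1 b2 by (auto simp: hom_def)
    show "\<alpha>'' \<cdot> v' \<cdot> v = (w' \<cdot> w) \<cdot> \<alpha>"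
      using a1 a2 a3 b1 b2 by (auto simp: hom_def comp_reassoc[OF b2(4)])
    show "(v' \<cdot> v) \<cdot> \<beta> = \<beta>'' \<cdot> w' \<cdot> w"
      using a1 a2 a3 b1 b2 by (auto simp: hom_def comp_reassoc[OF b2(5)])
  qed
qed

lemma split_ext_mor_Id:
  assumes "split_ext C \<kappa> \<alpha> \<beta>"
  shows "split_ext_mor C \<kappa> \<alpha> \<beta> \<kappa> \<alpha> \<beta> (Id C (Dom C \<alpha>)) (Id C (Cod C \<alpha>))"
  using split_extD[OF assms] by (intro split_ext_morI) (auto simp: hom_def intro: Id_hom)

lemma generic_split_extD:
  assumes "generic_split_ext C X k p i"
  shows "split_ext C k p i" "Dom C k = X"
  using assms unfolding generic_split_ext_def by simp_all

lemma generic_split_ext_universal: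
  assumes "generic_split_ext C X k p i" "split_ext C \<kappa> \<alpha> \<beta>" "Dom C \<kappa> = X"
  shows "\<exists>!vw. split_ext_mor C \<kappa> \<alpha> \<beta> k p i (fst vw) (snd vw)"
proof -
  have "\<forall>\<kappa> \<alpha> \<beta>. split_ext C \<kappa> \<alpha> \<beta> \<and> Dom C \<kappa> = X \<longrightarrow>
      (\<exists>!vw. split_ext_mor C \<kappa> \<alpha> \<beta> k p i (fst vw) (snd vw))"
    using assms(1) unfolding generic_split_ext_def by (elim conjE)
  then show ?thesis using assms(2,3) by blast
qed

lemma generic_split_ext_mor_exists:
  assumes "generic_split_ext C X k p i" "split_ext C \<kappa> \<alpha> \<beta>" "Dom C \<kappa> = X"
  obtains v w where "split_ext_mor C \<kappa> \<alpha> \<beta> k p i v w"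
  using ex1_implies_ex[OF generic_split_ext_universal[OF assms]] by blast

lemma generic_split_ext_mor_unique:
  assumes "generic_split_ext C X k p i" "split_ext C \<kappa> \<alpha> \<beta>" "Dom C \<kappa> = X"
    "split_ext_mor C \<kappa> \<alpha> \<beta> k p i v1 w1" "split_ext_mor C \<kappa> \<alpha> \<beta> k p i v2 w2"
  shows "w1 = w2"
proof -
  have "(v1, w1) = (v2, w2)"
    by (rule ex1_unique[OF generic_split_ext_universal[OF assms(1-3)]]) (use assms(4,5) in simp_all)
  then show ?thesis by simp
qed

lemma product_injection_kernel:
  assumes P: "is_product C A B P p1 p2"
    and r: "r \<in> hom C B P" "p1 \<cdot> r = zero_map B A" "p2 \<cdot> r = Id C B"
  shows "is_kernel C r p1"
proof -
  note pd = productD[OF P]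
  show ?thesis
  proof (rule kernelI[OF r(1) pd(2) r(2)])
    fix W f assume f: "f \<in> hom C W P" "p1 \<cdot> f = zero_map W A"
    have W: "W \<in> Obj C" using f hom_Obj by blast
    have g: "p2 \<cdot> f \<in> hom C W B" using f pd comp_hom by blast
    have "r \<cdot> (p2 \<cdot> f) = f"
      by (rule product_unique[OF P])
        (use f g r pd W hom_Obj in \<open>auto simp: hom_def comp_reassoc[OF r(2)] comp_reassoc[OF r(3)]\<close>)
    then show "\<exists>g\<in>hom C W B. r \<cdot> g = f" using g by blast
  next
    fix W g h assume g: "g \<in> hom C W B" and h: "h \<in> hom C W B" and e: "r \<cdot> g = r \<cdot> h"
    have "p2 \<cdot> (r \<cdot> g) = p2 \<cdot> (r \<cdot> h)" using e by simp
    then show "g = h" using g h r pd by (auto simp: hom_def comp_reassoc[OF r(3)])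
  qed
qed

lemma product_split_ext:
  assumes P: "is_product C A B P p1 p2"
    and r: "r \<in> hom C B P" "p1 \<cdot> r = zero_map B A" "p2 \<cdot> r = Id C B"
    and l: "l \<in> hom C A P" "p1 \<cdot> l = Id C A"
  shows "split_ext C r p1 l"
  by (rule split_extI[OF productD(2)[OF P] l product_injection_kernel[OF assms(1-4)]])

lemma kernel_pair_split_ext:
  assumes k: "is_kernel C \<kappa> \<alpha>" and pb: "is_pullback C \<alpha> \<alpha> e1 e2"
  obtains kE dE where "split_ext C kE e2 dE" "kE \<in> hom C (Dom C \<kappa>) (Dom C e1)" "e1 \<cdot> kE = \<kappa>"
    "e2 \<cdot> kE = zero_map (Dom C \<kappa>) (Dom C \<alpha>)" "dE \<in> hom C (Dom C \<alpha>) (Dom C e1)"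
    "e1 \<cdot> dE = Id C (Dom C \<alpha>)" "e2 \<cdot> dE = Id C (Dom C \<alpha>)"
proof -
  note pd = pullbackD[OF pb]
  have A: "Dom C \<alpha> \<in> Obj C" using pd by simp
  obtain kE where kE: "kE \<in> hom C (Dom C \<kappa>) (Dom C e1)" "e1 \<cdot> kE = \<kappa>"
    "e2 \<cdot> kE = zero_map (Dom C \<kappa>) (Dom C \<alpha>)" "is_kernel C kE e2"
    using kernel_pullback[OF pb k] by blast
  have "Id C (Dom C \<alpha>) \<in> hom C (Dom C \<alpha>) (Dom C \<alpha>)" "\<alpha> \<cdot> Id C (Dom C \<alpha>) = \<alpha> \<cdot> Id C (Dom C \<alpha>)"
    using Id_hom[OF A] by simp_all
  then obtain dE where dE: "dE \<in> hom C (Dom C \<alpha>) (Dom C e1)" "e1 \<cdot> dE = Id C (Dom C \<alpha>)"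
    "e2 \<cdot> dE = Id C (Dom C \<alpha>)"
    using pullback_factor[OF pb] by metis
  have "split_ext C kE e2 dE" using split_extI[OF pd(2) dE(1,3) kE(4)] .
  then show ?thesis using that kE dE by blast
qed

lemma split_ext_mor_into_kernel_pair_ext:
  assumes pb: "is_pullback C \<alpha> \<alpha> e1 e2"
    and kE: "kE \<in> hom C (Dom C \<kappa>) (Dom C e1)" "e1 \<cdot> kE = \<kappa>" "e2 \<cdot> kE = zero_map (Dom C \<kappa>) (Dom C \<alpha>)"
    and dE: "dE \<in> hom C (Dom C \<alpha>) (Dom C e1)" "e1 \<cdot> dE = Id C (Dom C \<alpha>)" "e2 \<cdot> dE = Id C (Dom C \<alpha>)"
    and s0: "split_ext C \<kappa>0 \<alpha>0 \<beta>0" "Dom C \<kappa>0 = Dom C \<kappa>"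
    and x: "x \<in> hom C (Dom C \<alpha>0) (Dom C \<alpha>)" "x \<cdot> \<kappa>0 = \<kappa>" "x \<cdot> \<beta>0 = w"
    and w: "w \<in> hom C (Cod C \<alpha>0) (Dom C \<alpha>)" "\<alpha> \<cdot> x = \<alpha> \<cdot> (w \<cdot> \<alpha>0)"
  obtains u where "split_ext_mor C \<kappa>0 \<alpha>0 \<beta>0 kE e2 dE u w"
proof -
  note pd = pullbackD[OF pb] and sp = split_extD[OF s0(1)]
  note h = homD[OF kE(1)] homD[OF dE(1)] homD[OF x(1)] homD[OF w(1)] homD[OF sp(1)] homD[OF sp(2)]
    homD[OF sp(5)] homD[OF pd(1)] homD[OF pd(2)]
  have "w \<cdot> \<alpha>0 \<in> hom C (Dom C \<alpha>0) (Dom C \<alpha>)" using h by (simp add: hom_def)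
  then obtain u where u: "u \<in> hom C (Dom C \<alpha>0) (Dom C e1)" "e1 \<cdot> u = x" "e2 \<cdot> u = w \<cdot> \<alpha>0"
    using pullback_factor[OF pb x(1) _ w(2)] by blast
  note hu = homD[OF u(1)]
  have K: "Dom C \<kappa> \<in> Obj C" using h by (metis Dom_Obj)
  have "split_ext_mor C \<kappa>0 \<alpha>0 \<beta>0 kE e2 dE u w"
  proof (rule split_ext_morI)
    show "u \<in> hom C (Dom C \<alpha>0) (Dom C e2)" "w \<in> hom C (Cod C \<alpha>0) (Cod C e2)" using u(1) w(1) h by simp_all
    show "u \<cdot> \<kappa>0 = kE"
      by (rule pullback_unique[OF pb, of _ "Dom C \<kappa>"])
        (use h hu s0(2) kE sp(6) K in \<open>simp_all add: hom_def comp_reassoc[OF u(2)] comp_reassoc[OF u(3)] x(2)\<close>)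
    show "e2 \<cdot> u = w \<cdot> \<alpha>0" by (rule u(3))
    show "u \<cdot> \<beta>0 = dE \<cdot> w"
      by (rule pullback_unique[OF pb, of _ "Cod C \<alpha>0"])
        (use h hu in \<open>simp_all add: hom_def comp_reassoc[OF u(2)] comp_reassoc[OF u(3)] x(3)
          comp_reassoc[OF dE(2)] comp_reassoc[OF dE(3)] sp(3)\<close>)
  qed
  then show ?thesis using that by blast
qed

end

section \<open>Strong-complete objects\<close>

context pointed_lex_categ
begin

lemma strong_complete_retraction:
  assumes "strong_complete C Y" "protosplit_mono C m" "Dom C m = Y"
  shows "\<exists>!r. r \<in> hom C (Cod C m) Y \<and> r \<cdot> m = Id C Y"
  using assms unfolding strong_complete_def by blast

lemma split_ext_mor_into_product_iff:
  assumes Q: "is_product C Y Y Q t1 t2"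
    and k0: "k0 \<in> hom C Y Q" "t1 \<cdot> k0 = zero_map Y Y" "t2 \<cdot> k0 = Id C Y"
    and dg: "dg \<in> hom C Y Q" "t1 \<cdot> dg = Id C Y" "t2 \<cdot> dg = Id C Y"
    and s: "split_ext C \<kappa> \<alpha> \<beta>" "Dom C \<kappa> = Y"
  shows "split_ext_mor C \<kappa> \<alpha> \<beta> k0 t1 dg v w \<longleftrightarrow>
    (\<exists>r. r \<in> hom C (Dom C \<alpha>) Y \<and> r \<cdot> \<kappa> = Id C Y \<and>
      v \<in> hom C (Dom C \<alpha>) Q \<and> t1 \<cdot> v = r \<cdot> \<beta> \<cdot> \<alpha> \<and> t2 \<cdot> v = r \<and> w = r \<cdot> \<beta>)"
proof -
  note sp = split_extD(1-3,5,6)[OF s(1), unfolded s(2)] and qd = productD[OF Q]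
  note h = homD[OF sp(1)] homD[OF sp(2)] homD[OF sp(4)] homD[OF qd(2)] homD[OF qd(3)] homD[OF k0(1)]
    homD[OF dg(1)]
  have Y: "Y \<in> Obj C" using k0(1) hom_Obj by blast
  show ?thesis
  proof
    assume m: "split_ext_mor C \<kappa> \<alpha> \<beta> k0 t1 dg v w"
    note md = split_ext_morD[OF m]
    note hv = homD[OF md(1)] homD[OF md(2)]
    have "w = t2 \<cdot> (dg \<cdot> w)" using hv h by (simp add: comp_reassoc[OF dg(3)])
    also have "\<dots> = (t2 \<cdot> v) \<cdot> \<beta>" using hv h by (simp flip: md(5))
    finally have w: "w = (t2 \<cdot> v) \<cdot> \<beta>" .
    have "t2 \<cdot> v \<in> hom C (Dom C \<alpha>) Y" "(t2 \<cdot> v) \<cdot> \<kappa> = Id C Y" "t1 \<cdot> v = (t2 \<cdot> v) \<cdot> \<beta> \<cdot> \<alpha>"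
      using hv h md(3,4) w k0(3) by (simp_all add: hom_def)
    then show "\<exists>r. r \<in> hom C (Dom C \<alpha>) Y \<and> r \<cdot> \<kappa> = Id C Y \<and> v \<in> hom C (Dom C \<alpha>) Q \<and>
        t1 \<cdot> v = r \<cdot> \<beta> \<cdot> \<alpha> \<and> t2 \<cdot> v = r \<and> w = r \<cdot> \<beta>"
      using md(1) w h by auto
  next
    assume "\<exists>r. r \<in> hom C (Dom C \<alpha>) Y \<and> r \<cdot> \<kappa> = Id C Y \<and> v \<in> hom C (Dom C \<alpha>) Q \<and>
        t1 \<cdot> v = r \<cdot> \<beta> \<cdot> \<alpha> \<and> t2 \<cdot> v = r \<and> w = r \<cdot> \<beta>"
    then obtain r where r: "r \<in> hom C (Dom C \<alpha>) Y" "r \<cdot> \<kappa> = Id C Y" "v \<in> hom C (Dom C \<alpha>) Q"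
      "t1 \<cdot> v = r \<cdot> \<beta> \<cdot> \<alpha>" "t2 \<cdot> v = r" "w = r \<cdot> \<beta>" by blast
    note hr = homD[OF r(1)] homD[OF r(3)]
    show "split_ext_mor C \<kappa> \<alpha> \<beta> k0 t1 dg v w"
    proof (rule split_ext_morI)
      show "v \<in> hom C (Dom C \<alpha>) (Dom C t1)" "w \<in> hom C (Cod C \<alpha>) (Cod C t1)"
        using r(3,6) hr h by (simp_all add: hom_def)
      show "v \<cdot> \<kappa> = k0"
        by (rule product_unique[OF Q, of _ Y])
          (use hr h Y k0 in \<open>simp_all add: hom_def comp_reassoc[OF r(4)] comp_reassoc[OF r(5)] sp(5) r(2)\<close>)
      show "t1 \<cdot> v = w \<cdot> \<alpha>" using r(4,6) hr h by simp
      show "v \<cdot> \<beta> = dg \<cdot> w"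
        by (rule product_unique[OF Q, of _ "Cod C \<alpha>"])
          (use hr h r(6) in \<open>simp_all add: hom_def comp_reassoc[OF r(4)] comp_reassoc[OF r(5)]
            comp_reassoc[OF dg(2)] comp_reassoc[OF dg(3)] sp(3)\<close>)
    qed
  qed
qed

lemma strong_complete_generic_split_ext:
  assumes sc: "strong_complete C Y"
  shows "\<exists>k' p' i'. generic_split_ext C Y k' p' i'"
proof -
  have Y: "Y \<in> Obj C" using sc unfolding strong_complete_def by blast
  obtain Q t1 t2 where Q: "is_product C Y Y Q t1 t2" using product_exists[OF Y Y] by blast
  obtain k0 where k0: "k0 \<in> hom C Y Q" "t1 \<cdot> k0 = zero_map Y Y" "t2 \<cdot> k0 = Id C Y"
    using product_factor[OF Q zero_map_hom[OF Y Y] Id_hom[OF Y]] by blast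
  obtain dg where dg: "dg \<in> hom C Y Q" "t1 \<cdot> dg = Id C Y" "t2 \<cdot> dg = Id C Y"
    using product_factor[OF Q Id_hom[OF Y] Id_hom[OF Y]] by blast
  note mor_iff = split_ext_mor_into_product_iff[OF Q k0 dg]
  have "generic_split_ext C Y k0 t1 dg" unfolding generic_split_ext_def
  proof (intro conjI allI impI)
    show "split_ext C k0 t1 dg" by (rule product_split_ext[OF Q k0 dg(1,2)])
    show "Dom C k0 = Y" using k0(1) by (simp add: hom_def)
    fix \<kappa> \<alpha> \<beta> assume a: "split_ext C \<kappa> \<alpha> \<beta> \<and> Dom C \<kappa> = Y"
    note sp = split_extD[OF conjunct1[OF a]]
    have ps: "protosplit_mono C \<kappa>" using protosplit_monoI[OF sp(4) sp(2,3)] .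
    have "Cod C \<kappa> = Dom C \<alpha>" using sp(5) by (simp add: hom_def)
    then obtain r where r: "r \<in> hom C (Dom C \<alpha>) Y" "r \<cdot> \<kappa> = Id C Y"
      and r_unique: "\<And>r'. r' \<in> hom C (Dom C \<alpha>) Y \<Longrightarrow> r' \<cdot> \<kappa> = Id C Y \<Longrightarrow> r' = r"
      using strong_complete_retraction[OF sc ps] a by metis
    have "r \<cdot> \<beta> \<cdot> \<alpha> \<in> hom C (Dom C \<alpha>) Y" using r(1) sp(1,2) comp_hom by blast
    then obtain v where v: "v \<in> hom C (Dom C \<alpha>) Q" "t1 \<cdot> v = r \<cdot> \<beta> \<cdot> \<alpha>" "t2 \<cdot> v = r"
      using product_factor[OF Q _ r(1)] by blast
    show "\<exists>!vw. split_ext_mor C \<kappa> \<alpha> \<beta> k0 t1 dg (fst vw) (snd vw)"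
    proof (rule ex1I[of _ "(v, r \<cdot> \<beta>)"])
      show "split_ext_mor C \<kappa> \<alpha> \<beta> k0 t1 dg (fst (v, r \<cdot> \<beta>)) (snd (v, r \<cdot> \<beta>))"
        using mor_iff a r v by auto
    next
      fix vw assume "split_ext_mor C \<kappa> \<alpha> \<beta> k0 t1 dg (fst vw) (snd vw)"
      then obtain r' where r': "r' \<in> hom C (Dom C \<alpha>) Y" "r' \<cdot> \<kappa> = Id C Y" "fst vw \<in> hom C (Dom C \<alpha>) Q"
        "t1 \<cdot> fst vw = r' \<cdot> \<beta> \<cdot> \<alpha>" "t2 \<cdot> fst vw = r'" "snd vw = r' \<cdot> \<beta>"
        using mor_iff a by blast
      then have "r' = r" using r_unique by blast
      then have "fst vw = v" using product_unique[OF Q r'(3) v(1)] r' v by simp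
      then show "vw = (v, r \<cdot> \<beta>)" using r'(6) \<open>r' = r\<close> by (cases vw) simp
    qed
  qed
  then show ?thesis by blast
qed

text \<open>\<open>\<rho>\<close> is the retraction, given by strong-completeness, of the kernel \<open>mt \<cdot> \<langle>0, 1\<rangle>\<close> of \<open>r1\<close>.\<close>

lemma strong_complete_normal_retraction:
  assumes sc: "strong_complete C Y" and er: "equiv_rel C Z r1 r2" and PY: "is_product C Y Y PY p1 p2"
    and mt: "mt \<in> hom C PY (Dom C r1)" "r1 \<cdot> mt = n \<cdot> p1" "r2 \<cdot> mt = n \<cdot> p2"
    and pb: "is_pullback C r1 n mt p1" and n: "n \<in> hom C Y Z"
    and \<delta>: "\<delta> \<in> hom C Z (Dom C r1)" "r1 \<cdot> \<delta> = Id C Z" "r2 \<cdot> \<delta> = Id C Z"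
  obtains \<rho> where "\<rho> \<in> hom C (Dom C r1) Y" "\<rho> \<cdot> mt = p2" "\<rho> \<cdot> (\<delta> \<cdot> n) = Id C Y"
proof -
  note ed = equiv_relD[OF er] and qd = productD[OF PY]
  have Y: "Y \<in> Obj C" using n hom_Obj by blast
  obtain d' where d': "d' \<in> hom C Y PY" "p1 \<cdot> d' = zero_map Y Y" "p2 \<cdot> d' = Id C Y"
    using product_factor[OF PY zero_map_hom[OF Y Y] Id_hom[OF Y]] by blast
  obtain dg where dg: "dg \<in> hom C Y PY" "p1 \<cdot> dg = Id C Y" "p2 \<cdot> dg = Id C Y"
    using product_factor[OF PY Id_hom[OF Y] Id_hom[OF Y]] by blast
  note h = homD[OF ed(1)] homD[OF ed(2)] homD[OF n] homD[OF mt(1)] homD[OF d'(1)] homD[OF dg(1)]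
    homD[OF \<delta>(1)] homD[OF qd(2)] homD[OF qd(3)]
  have "protosplit_mono C (mt \<cdot> d')"
    using protosplit_monoI[OF bourn_normal_kernel[OF er PY mt pb n d']] \<delta> h by simp
  then obtain \<rho> where \<rho>: "\<rho> \<in> hom C (Dom C r1) Y" "\<rho> \<cdot> (mt \<cdot> d') = Id C Y"
    using strong_complete_retraction[OF sc] h by (metis comp_simps(2,3))
  note hr = homD[OF \<rho>(1)]
  have "protosplit_mono C d'"
    using protosplit_monoI[OF product_injection_kernel[OF PY d']] dg h by simp
  moreover have "\<rho> \<cdot> mt \<in> hom C PY Y" "(\<rho> \<cdot> mt) \<cdot> d' = Id C Y" "p2 \<cdot> d' = Id C Y"
    using hr h \<rho>(2) d'(3) by (simp_all add: hom_def)
  ultimately have \<rho>mt: "\<rho> \<cdot> mt = p2"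
    using strong_complete_retraction[OF sc] qd(3) h by (metis ex1_unique)
  have "mt \<cdot> dg = \<delta> \<cdot> n"
    by (rule jointly_monicD[OF ed(3), of _ Y])
      (use h in \<open>simp_all add: hom_def comp_reassoc[OF mt(2)] comp_reassoc[OF mt(3)]
        comp_reassoc[OF \<delta>(2)] comp_reassoc[OF \<delta>(3)] dg(2,3)\<close>)
  then have "\<rho> \<cdot> (\<delta> \<cdot> n) = Id C Y" using h hr by (metis comp_reassoc[OF \<rho>mt] dg(3) homD)
  then show ?thesis using that \<rho>(1) \<rho>mt by blast
qed

end

section \<open>Protomodular categories\<close>

locale protomodular_categ = pointed_lex_categ +
  assumes protomodular: "protomodular C"
begin

lemma split_short_five:
  assumes "split_ext C \<kappa> \<alpha> \<beta>" "split_ext C \<kappa>' \<alpha>' \<beta>'"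
    "u \<in> hom C (Dom C \<kappa>) (Dom C \<kappa>')" "v \<in> hom C (Dom C \<alpha>) (Dom C \<alpha>')" "w \<in> hom C (Cod C \<alpha>) (Cod C \<alpha>')"
    "v \<cdot> \<kappa> = \<kappa>' \<cdot> u" "\<alpha>' \<cdot> v = w \<cdot> \<alpha>" "v \<cdot> \<beta> = \<beta>' \<cdot> w" "is_iso C u" "is_iso C w"
  shows "is_iso C v"
  using protomodular assms unfolding protomodular_def by blast

lemma split_ext_mor_pullback:
  assumes s: "split_ext C \<kappa> \<alpha> \<beta>" and s': "split_ext C \<kappa>' \<alpha>' \<beta>'"
    and X: "Dom C \<kappa> = Dom C \<kappa>'" and m: "split_ext_mor C \<kappa> \<alpha> \<beta> \<kappa>' \<alpha>' \<beta>' v w"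
  shows "is_pullback C \<alpha>' w v \<alpha>"
proof -
  note sp = split_extD[OF s] and sp' = split_extD[OF s'] and md = split_ext_morD[OF m]
  define Y where "Y = Dom C \<kappa>"
  define B where "B = Cod C \<alpha>"
  have hs: "\<alpha> \<in> hom C (Dom C \<alpha>) B" "\<beta> \<in> hom C B (Dom C \<alpha>)" "\<kappa> \<in> hom C Y (Dom C \<alpha>)"
    "\<alpha>' \<in> hom C (Dom C \<alpha>') (Cod C \<alpha>')" "\<beta>' \<in> hom C (Cod C \<alpha>') (Dom C \<alpha>')" "\<kappa>' \<in> hom C Y (Dom C \<alpha>')"
    "v \<in> hom C (Dom C \<alpha>) (Dom C \<alpha>')" "w \<in> hom C B (Cod C \<alpha>')"
    using sp sp' md X unfolding Y_def B_def by simp_all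
  have ob: "Y \<in> Obj C" "B \<in> Obj C" using hs hom_Obj by blast+
  obtain P a b where pb: "is_pullback C \<alpha>' w a b" "a \<in> hom C P (Dom C \<alpha>')" "b \<in> hom C P B"
    using pullback_exists[OF hs(4,8)] by blast
  have dom: "Dom C \<kappa>' = Y" "Dom C a = P" "Dom C w = B" using X pb(2) hs(8) unfolding Y_def by (simp_all add: hom_def)
  obtain kP where kP: "kP \<in> hom C Y P" "a \<cdot> kP = \<kappa>'" "b \<cdot> kP = zero_map Y B" "is_kernel C kP b"
    using kernel_pullback[OF pb(1) sp'(4)] unfolding dom by blast
  have "\<beta>' \<cdot> w \<in> hom C B (Dom C \<alpha>')" "Id C B \<in> hom C B (Dom C w)" "\<alpha>' \<cdot> (\<beta>' \<cdot> w) = w \<cdot> Id C B"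
    using hs ob dom comp_hom Id_hom by (auto simp: hom_def comp_reassoc[OF sp'(3)])
  then obtain bP where bP: "bP \<in> hom C B P" "a \<cdot> bP = \<beta>' \<cdot> w" "b \<cdot> bP = Id C B"
    using pullback_factor[OF pb(1)] unfolding dom by blast
  obtain t where t: "t \<in> hom C (Dom C \<alpha>) P" "a \<cdot> t = v" "b \<cdot> t = \<alpha>"
    using pullback_factor[OF pb(1) hs(7) _ md(4)] hs(1) dom by (metis homD(2) hom_def)
  note h = homD[OF hs(1)] homD[OF hs(2)] homD[OF hs(3)] homD[OF t(1)] homD[OF pb(2)] homD[OF pb(3)]
    homD[OF kP(1)] homD[OF bP(1)]
  have "t \<cdot> \<kappa> = kP"
  proof (rule pullback_unique[OF pb(1), of _ Y])
    show "t \<cdot> \<kappa> \<in> hom C Y (Dom C a)" "kP \<in> hom C Y (Dom C a)" using h kP(1) by (simp_all add: hom_def)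
    show "a \<cdot> t \<cdot> \<kappa> = a \<cdot> kP" using h by (simp add: comp_reassoc[OF t(2)] md(3) kP(2))
    show "b \<cdot> t \<cdot> \<kappa> = b \<cdot> kP" using h by (simp add: comp_reassoc[OF t(3)] sp(6) kP(3) Y_def B_def)
  qed
  moreover have "t \<cdot> \<beta> = bP"
  proof (rule pullback_unique[OF pb(1), of _ B])
    show "t \<cdot> \<beta> \<in> hom C B (Dom C a)" "bP \<in> hom C B (Dom C a)" using h bP(1) by (simp_all add: hom_def)
    show "a \<cdot> t \<cdot> \<beta> = a \<cdot> bP" using h by (simp add: comp_reassoc[OF t(2)] md(5) bP(2))
    show "b \<cdot> t \<cdot> \<beta> = b \<cdot> bP" using h by (simp add: comp_reassoc[OF t(3)] sp(3) bP(3) B_def)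
  qed
  moreover have "split_ext C kP b bP" using split_extI[OF pb(3) bP(1,3) kP(4)] .
  ultimately have "is_iso C t"
    using split_short_five[OF s, of kP b bP "Id C Y" t "Id C B"] t h kP(1) ob Id_hom Id_iso
    unfolding Y_def B_def by (simp add: hom_def)
  then show ?thesis using pullback_comp_iso[OF pb(1)] t pb by (auto simp: hom_def)
qed

lemma split_ext_mono_iso:
  assumes s: "split_ext C \<kappa> \<alpha> \<beta>" and e: "is_mono C e" "e \<in> hom C E (Dom C \<alpha>)"
    and \<kappa>': "\<kappa>' \<in> hom C (Dom C \<kappa>) E" "e \<cdot> \<kappa>' = \<kappa>"
    and \<beta>': "\<beta>' \<in> hom C (Cod C \<alpha>) E" "e \<cdot> \<beta>' = \<beta>"
  shows "is_iso C e"
proof -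
  note sp = split_extD[OF s]
  note h = homD[OF e(2)] homD[OF \<kappa>'(1)] homD[OF \<beta>'(1)] homD[OF sp(1)] homD[OF sp(2)] homD[OF sp(5)]
  have ae: "\<alpha> \<cdot> e \<in> hom C E (Cod C \<alpha>)" using h by (simp add: hom_def)
  have "(\<alpha> \<cdot> e) \<cdot> \<beta>' = Id C (Cod C \<alpha>)" using h sp(3) \<beta>'(2) by simp
  then have s': "split_ext C \<kappa>' (\<alpha> \<cdot> e) \<beta>'"
    using split_extI[OF ae \<beta>'(1)] kernel_through_mono[OF sp(4) e \<kappa>'] by blast
  have ob: "Dom C \<kappa> \<in> Obj C" "Cod C \<alpha> \<in> Obj C" using h by simp_all
  show ?thesis
    by (rule split_short_five[OF s' s, of "Id C (Dom C \<kappa>)" e "Id C (Cod C \<alpha>)"])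
      (use h ob \<kappa>'(2) \<beta>'(2) Id_hom Id_iso in \<open>simp_all add: hom_def\<close>)
qed

lemma split_ext_factor_through_mono:
  assumes s: "split_ext C \<kappa> \<alpha> \<beta>" and \<mu>: "is_mono C \<mu>" "\<mu> \<in> hom C M T"
    and f: "f \<in> hom C (Dom C \<alpha>) T"
    and a: "a \<in> hom C (Dom C \<kappa>) M" "\<mu> \<cdot> a = f \<cdot> \<kappa>" and b: "b \<in> hom C (Cod C \<alpha>) M" "\<mu> \<cdot> b = f \<cdot> \<beta>"
  obtains h where "h \<in> hom C (Dom C \<alpha>) M" "\<mu> \<cdot> h = f"
proof -
  note sp = split_extD[OF s]
  obtain E e1 e2 where pb: "is_pullback C f \<mu> e1 e2" "e1 \<in> hom C E (Dom C \<alpha>)" "e2 \<in> hom C E M"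
    using pullback_exists[OF f \<mu>(2)] by blast
  note h = homD[OF pb(2)] homD[OF pb(3)] homD[OF f] homD[OF \<mu>(2)] homD[OF sp(2)] homD[OF sp(5)]
  have dom: "Dom C f = Dom C \<alpha>" "Dom C \<mu> = M" "Dom C e1 = E" using h by simp_all
  obtain \<kappa>' where \<kappa>': "\<kappa>' \<in> hom C (Dom C \<kappa>) E" "e1 \<cdot> \<kappa>' = \<kappa>" "e2 \<cdot> \<kappa>' = a"
    using pullback_factor[OF pb(1) _ _ a(2)[symmetric]] sp(5) a(1) unfolding dom by blast
  obtain \<beta>' where \<beta>': "\<beta>' \<in> hom C (Cod C \<alpha>) E" "e1 \<cdot> \<beta>' = \<beta>" "e2 \<cdot> \<beta>' = b"
    using pullback_factor[OF pb(1) _ _ b(2)[symmetric]] sp(2) b(1) unfolding dom by blast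
  have "is_iso C e1"
    using split_ext_mono_iso[OF s pullback_mono[OF pb(1) \<mu>(1)] pb(2)] \<kappa>' \<beta>' h by (simp add: hom_def)
  then obtain j where j: "j \<in> hom C (Dom C \<alpha>) E" "e1 \<cdot> j = Id C (Dom C \<alpha>)"
    using isoE h by metis
  have sq: "\<mu> \<cdot> e2 = f \<cdot> e1" using pullbackD(3)[OF pb(1)] by simp
  have "\<mu> \<cdot> (e2 \<cdot> j) = f"
    using j h by (simp add: hom_def comp_reassoc[OF sq])
  then show ?thesis using that j(1) pb(3) comp_hom by blast
qed

lemma split_ext_factor_through_jointly_monic:
  assumes s: "split_ext C \<kappa> \<alpha> \<beta>" and jm: "jointly_monic C r1 r2"
    and r: "r1 \<in> hom C R Z1" "r2 \<in> hom C R Z2"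
    and f: "f1 \<in> hom C (Dom C \<alpha>) Z1" "f2 \<in> hom C (Dom C \<alpha>) Z2"
    and a: "a \<in> hom C (Dom C \<kappa>) R" "r1 \<cdot> a = f1 \<cdot> \<kappa>" "r2 \<cdot> a = f2 \<cdot> \<kappa>"
    and b: "b \<in> hom C (Cod C \<alpha>) R" "r1 \<cdot> b = f1 \<cdot> \<beta>" "r2 \<cdot> b = f2 \<cdot> \<beta>"
  obtains h where "h \<in> hom C (Dom C \<alpha>) R" "r1 \<cdot> h = f1" "r2 \<cdot> h = f2"
proof -
  note sp = split_extD[OF s]
  obtain Q t1 t2 where Q: "is_product C Z1 Z2 Q t1 t2"
    using product_exists r hom_Obj by metis
  note qd = productD[OF Q]
  obtain \<mu> where \<mu>: "\<mu> \<in> hom C R Q" "t1 \<cdot> \<mu> = r1" "t2 \<cdot> \<mu> = r2"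
    using product_factor[OF Q r] by blast
  obtain g where g: "g \<in> hom C (Dom C \<alpha>) Q" "t1 \<cdot> g = f1" "t2 \<cdot> g = f2"
    using product_factor[OF Q f] by blast
  note h = homD[OF qd(2)] homD[OF qd(3)] homD[OF \<mu>(1)] homD[OF g(1)] homD[OF a(1)] homD[OF b(1)]
    homD[OF sp(2)] homD[OF sp(5)]
  have "\<mu> \<cdot> a = g \<cdot> \<kappa>"
    by (rule product_unique[OF Q, of _ "Dom C \<kappa>"])
      (use h a(2,3) in \<open>simp_all add: hom_def comp_reassoc[OF \<mu>(2)] comp_reassoc[OF \<mu>(3)]
        comp_reassoc[OF g(2)] comp_reassoc[OF g(3)]\<close>)
  moreover have "\<mu> \<cdot> b = g \<cdot> \<beta>"
    by (rule product_unique[OF Q, of _ "Cod C \<alpha>"])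
      (use h b(2,3) in \<open>simp_all add: hom_def comp_reassoc[OF \<mu>(2)] comp_reassoc[OF \<mu>(3)]
        comp_reassoc[OF g(2)] comp_reassoc[OF g(3)]\<close>)
  moreover have "is_mono C \<mu>" using jointly_monic_iff_pairing_mono[OF Q r \<mu>] jm by blast
  ultimately obtain k where k: "k \<in> hom C (Dom C \<alpha>) R" "\<mu> \<cdot> k = g"
    using split_ext_factor_through_mono[OF s _ \<mu>(1) g(1) a(1) _ b(1)] by metis
  have "r1 \<cdot> k = f1" "r2 \<cdot> k = f2"
    using k h by (simp_all add: hom_def comp_reassoc[OF \<mu>(2), symmetric] comp_reassoc[OF \<mu>(3), symmetric]
        flip: g(2,3))
  then show ?thesis using that k(1) by blast
qed

lemma split_ext_jointly_epic:
  assumes s: "split_ext C \<kappa> \<alpha> \<beta>" and f: "f \<in> hom C (Dom C \<alpha>) T" and g: "g \<in> hom C (Dom C \<alpha>) T"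
    and e: "f \<cdot> \<kappa> = g \<cdot> \<kappa>" "f \<cdot> \<beta> = g \<cdot> \<beta>"
  shows "f = g"
proof -
  note sp = split_extD[OF s]
  have T: "T \<in> Obj C" using f hom_Obj by blast
  have "jointly_monic C (Id C T) (Id C T)"
    by (rule jointly_monicI) (use T in \<open>simp add: hom_def\<close>)
  moreover have "f \<cdot> \<kappa> \<in> hom C (Dom C \<kappa>) T" "f \<cdot> \<beta> \<in> hom C (Cod C \<alpha>) T"
    using f sp comp_hom by blast+
  ultimately obtain h where "h \<in> hom C (Dom C \<alpha>) T" "Id C T \<cdot> h = f" "Id C T \<cdot> h = g"
    using split_ext_factor_through_jointly_monic[OF s _ Id_hom[OF T] Id_hom[OF T] f g] e
    by (simp add: hom_def) metis
  then show ?thesis by simp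
qed

text \<open>Both extensions are pullbacks of the third one along the same map.\<close>

lemma split_ext_mor_factor:
  assumes s1: "split_ext C \<kappa>1 \<alpha>1 \<beta>1" and s2: "split_ext C \<kappa>2 \<alpha>2 \<beta>2" and s: "split_ext C \<kappa> \<alpha> \<beta>"
    and X: "Dom C \<kappa>1 = Dom C \<kappa>2" "Dom C \<kappa>2 = Dom C \<kappa>" and B: "Cod C \<alpha>1 = Cod C \<alpha>2"
    and m1: "split_ext_mor C \<kappa>1 \<alpha>1 \<beta>1 \<kappa> \<alpha> \<beta> v1 w" and m2: "split_ext_mor C \<kappa>2 \<alpha>2 \<beta>2 \<kappa> \<alpha> \<beta> v2 w"
  obtains \<theta> where "split_ext_mor C \<kappa>1 \<alpha>1 \<beta>1 \<kappa>2 \<alpha>2 \<beta>2 \<theta> (Id C (Cod C \<alpha>1))"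
proof -
  note sp1 = split_extD[OF s1] and sp2 = split_extD[OF s2]
  note md1 = split_ext_morD[OF m1] and md2 = split_ext_morD[OF m2]
  note pb = split_ext_mor_pullback[OF s2 s X(2) m2]
  note h = homD[OF sp1(1)] homD[OF sp1(2)] homD[OF sp1(5)] homD[OF sp2(1)] homD[OF sp2(2)]
    homD[OF sp2(5)] homD[OF md1(1)] homD[OF md1(2)] homD[OF md2(1)] homD[OF md2(2)]
  have "v1 \<in> hom C (Dom C \<alpha>1) (Dom C \<alpha>)" "\<alpha>1 \<in> hom C (Dom C \<alpha>1) (Dom C w)" using h B by (simp_all add: hom_def)
  then obtain \<theta> where \<theta>: "\<theta> \<in> hom C (Dom C \<alpha>1) (Dom C v2)" "v2 \<cdot> \<theta> = v1" "\<alpha>2 \<cdot> \<theta> = \<alpha>1"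
    using pullback_factor[OF pb _ _ md1(4)] by blast
  note ht = homD[OF \<theta>(1)]
  have B1: "Cod C \<alpha>1 \<in> Obj C" using h by simp
  show ?thesis
  proof (rule that, rule split_ext_morI)
    show "\<theta> \<in> hom C (Dom C \<alpha>1) (Dom C \<alpha>2)" "Id C (Cod C \<alpha>1) \<in> hom C (Cod C \<alpha>1) (Cod C \<alpha>2)"
      using \<theta>(1) h B Id_hom[OF B1] by simp_all
    show "\<theta> \<cdot> \<kappa>1 = \<kappa>2"
    proof (rule pullback_unique[OF pb, of _ "Dom C \<kappa>1"])
      show "\<theta> \<cdot> \<kappa>1 \<in> hom C (Dom C \<kappa>1) (Dom C v2)" "\<kappa>2 \<in> hom C (Dom C \<kappa>1) (Dom C v2)"
        using h ht X by (simp_all add: hom_def)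
      show "v2 \<cdot> \<theta> \<cdot> \<kappa>1 = v2 \<cdot> \<kappa>2" using h ht md1(3) md2(3) by (simp add: comp_reassoc[OF \<theta>(2)])
      show "\<alpha>2 \<cdot> \<theta> \<cdot> \<kappa>1 = \<alpha>2 \<cdot> \<kappa>2" using h ht sp1(6) sp2(6) X B by (simp add: comp_reassoc[OF \<theta>(3)])
    qed
    show "\<alpha>2 \<cdot> \<theta> = Id C (Cod C \<alpha>1) \<cdot> \<alpha>1" using \<theta>(3) h by simp
    show "\<theta> \<cdot> \<beta>1 = \<beta>2 \<cdot> Id C (Cod C \<alpha>1)"
    proof (rule pullback_unique[OF pb, of _ "Cod C \<alpha>1"])
      show "\<theta> \<cdot> \<beta>1 \<in> hom C (Cod C \<alpha>1) (Dom C v2)" "\<beta>2 \<cdot> Id C (Cod C \<alpha>1) \<in> hom C (Cod C \<alpha>1) (Dom C v2)"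
        using h ht B by (simp_all add: hom_def)
      show "v2 \<cdot> \<theta> \<cdot> \<beta>1 = v2 \<cdot> \<beta>2 \<cdot> Id C (Cod C \<alpha>1)"
        using h ht md1(5) md2(5) B by (simp add: comp_reassoc[OF \<theta>(2)])
      show "\<alpha>2 \<cdot> \<theta> \<cdot> \<beta>1 = \<alpha>2 \<cdot> \<beta>2 \<cdot> Id C (Cod C \<alpha>1)"
        using h ht sp1(3) sp2(3) B by (simp add: comp_reassoc[OF \<theta>(3)])
    qed
  qed
qed

lemma split_ext_zero_kernel_iso:
  assumes s: "split_ext C (zero_map zero_obj (Dom C \<alpha>)) \<alpha> \<beta>"
  shows "is_iso C \<beta>"
proof -
  note sp = split_extD[OF s]
  note h = homD[OF sp(1)] homD[OF sp(2)]
  have ob: "Dom C \<alpha> \<in> Obj C" "Cod C \<alpha> \<in> Obj C" using h by simp_all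
  have "is_mono C (\<alpha> \<cdot> \<beta>)" using sp(3) iso_mono[OF Id_iso[OF ob(2)]] by simp
  then have "is_mono C \<beta>" using mono_comp_cancel h by simp
  moreover have "zero_map zero_obj (Cod C \<alpha>) \<in> hom C (Dom C (zero_map zero_obj (Dom C \<alpha>))) (Cod C \<alpha>)"
    "\<beta> \<cdot> zero_map zero_obj (Cod C \<alpha>) = zero_map zero_obj (Dom C \<alpha>)"
    "Id C (Cod C \<alpha>) \<in> hom C (Cod C \<alpha>) (Cod C \<alpha>)" "\<beta> \<cdot> Id C (Cod C \<alpha>) = \<beta>"
    using h ob Id_hom zero_map_hom by simp_all
  ultimately show ?thesis using split_ext_mono_iso[OF s _ sp(2)] by blast
qed

lemma mono_if_trivial_kernel:
  assumes f: "f \<in> hom C A B"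
    and trivial: "\<And>W g. g \<in> hom C W A \<Longrightarrow> f \<cdot> g = zero_map W B \<Longrightarrow> g = zero_map W A"
  shows "is_mono C f"
proof -
  have ob: "A \<in> Obj C" "B \<in> Obj C" using f hom_Obj by blast+
  obtain R r1 r2 where pb: "is_pullback C f f r1 r2" "r1 \<in> hom C R A" "r2 \<in> hom C R A"
    using pullback_exists[OF f f] by blast
  note pd = pullbackD[OF pb(1)]
  note h = homD[OF f] homD[OF pb(2)] homD[OF pb(3)]
  have R: "R \<in> Obj C" using pb hom_Obj by blast
  have "Id C A \<in> hom C A (Dom C f)" "f \<cdot> Id C A = f \<cdot> Id C A" using Id_hom[OF ob(1)] h by simp_all
  then obtain d where d: "d \<in> hom C A R" "r1 \<cdot> d = Id C A" "r2 \<cdot> d = Id C A"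
    using pullback_factor[OF pb(1)] h by metis
  note hd = homD[OF d(1)]
  have "is_kernel C (zero_map zero_obj R) r1"
  proof (rule zero_map_kernel[OF pb(2)])
    fix W g assume g: "g \<in> hom C W R" "r1 \<cdot> g = zero_map W A"
    have W: "W \<in> Obj C" using g hom_Obj by blast
    note hg = homD[OF g(1)]
    have "f \<cdot> (r2 \<cdot> g) = zero_map W B" using h hg g(2) ob W by (simp add: comp_reassoc[OF pd(3)[symmetric]])
    then have "r2 \<cdot> g = zero_map W A" using trivial[of "r2 \<cdot> g" W] h hg by (simp add: hom_def)
    show "g = zero_map W R"
    proof (rule pullback_unique[OF pb(1), of _ W])
      show "g \<in> hom C W (Dom C r1)" "zero_map W R \<in> hom C W (Dom C r1)"
        using g(1) h W R zero_map_hom by simp_all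
      show "r1 \<cdot> g = r1 \<cdot> zero_map W R" "r2 \<cdot> g = r2 \<cdot> zero_map W R"
        using g(2) \<open>r2 \<cdot> g = zero_map W A\<close> h W by simp_all
    qed
  qed
  then have "split_ext C (zero_map zero_obj (Dom C r1)) r1 d" using split_extI[OF pb(2) d(1,2)] h by simp
  then have "is_iso C d" by (rule split_ext_zero_kernel_iso)
  then obtain j where j: "j \<in> hom C R A" "d \<cdot> j = Id C R" using isoE hd by metis
  note hj = homD[OF j(1)]
  have "r1 = r1 \<cdot> (d \<cdot> j)" using j(2) h by simp
  also have "\<dots> = r2 \<cdot> (d \<cdot> j)" using h hd hj by (simp add: comp_reassoc[OF d(2)] comp_reassoc[OF d(3)])
  also have "\<dots> = r2" using j(2) h by simp
  finally have r12: "r1 = r2" .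
  show ?thesis
  proof (rule monoI)
    show "f \<in> Arr C" using h by simp
    fix W x y assume x: "x \<in> hom C W (Dom C f)" and y: "y \<in> hom C W (Dom C f)" and e: "f \<cdot> x = f \<cdot> y"
    obtain k where "r1 \<cdot> k = x" "r2 \<cdot> k = y" using pullback_factor[OF pb(1) x y e] by blast
    then show "x = y" using r12 by simp
  qed
qed

text \<open>In elements: if \<open>a R b\<close>, \<open>a' R b\<close> and \<open>a' R b'\<close> then \<open>a R b'\<close>.  The map is first built on
  the object \<open>D\<close> of all such triples, which carries a split extension whose kernel and section
  are sent into \<open>R\<close>.\<close>

lemma reflexive_relation_difunctional:
  assumes r: "r1 \<in> hom C R Z" "r2 \<in> hom C R Z" and jm: "jointly_monic C r1 r2"
    and d: "d \<in> hom C Z R" "r1 \<cdot> d = Id C Z" "r2 \<cdot> d = Id C Z"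
    and xyz: "x \<in> hom C W R" "y \<in> hom C W R" "z \<in> hom C W R" "r2 \<cdot> x = r2 \<cdot> y" "r1 \<cdot> y = r1 \<cdot> z"
  obtains u where "u \<in> hom C W R" "r1 \<cdot> u = r1 \<cdot> x" "r2 \<cdot> u = r2 \<cdot> z"
proof -
  note hr = homD[OF r(1)] homD[OF r(2)]
  have Z: "Z \<in> Obj C" using r hom_Obj by blast
  obtain K k2 where k2: "k2 \<in> hom C K R" "is_kernel C k2 r2" using kernel_exists[OF r(2)] by blast
  obtain D' p' q' where pb1: "is_pullback C r1 r1 p' q'" "p' \<in> hom C D' R" "q' \<in> hom C D' R"
    using pullback_exists[OF r(1) r(1)] by blast
  have rp: "r2 \<cdot> p' \<in> hom C D' Z" using pb1(2) r(2) comp_hom by blast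
  obtain D P1 P2 where pb2: "is_pullback C r2 (r2 \<cdot> p') P1 P2" "P1 \<in> hom C D R" "P2 \<in> hom C D D'"
    using pullback_exists[OF r(2) rp] by blast
  note h = hr homD[OF k2(1)] homD[OF pb1(2)] homD[OF pb1(3)] homD[OF pb2(2)] homD[OF pb2(3)] homD[OF rp]
  have D': "D' \<in> Obj C" using pb1(2) hom_Obj by blast
  obtain kD where kD: "kD \<in> hom C K D" "P1 \<cdot> kD = k2" "P2 \<cdot> kD = zero_map K D'" "is_kernel C kD P2"
    using kernel_pullback[OF pb2(1) k2(2)] h by metis
  have "r2 \<cdot> p' = (r2 \<cdot> p') \<cdot> Id C D'" "p' \<in> hom C D' (Dom C r2)" "Id C D' \<in> hom C D' (Dom C (r2 \<cdot> p'))"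
    using h D' Id_hom pb1(2) by simp_all
  then obtain sg where sg: "sg \<in> hom C D' D" "P1 \<cdot> sg = p'" "P2 \<cdot> sg = Id C D'"
    using pullback_factor[OF pb2(1)] h by metis
  note hk = homD[OF kD(1)] homD[OF sg(1)]
  have sD: "split_ext C kD P2 sg" using split_extI[OF pb2(3) sg(1,3) kD(4)] .
  have "r1 \<cdot> P1 \<in> hom C (Dom C P2) Z" "r2 \<cdot> (q' \<cdot> P2) \<in> hom C (Dom C P2) Z"
    "k2 \<in> hom C (Dom C kD) R" "q' \<in> hom C (Cod C P2) R" using h hk by (simp_all add: hom_def)
  moreover have "r1 \<cdot> k2 = (r1 \<cdot> P1) \<cdot> kD" "r2 \<cdot> k2 = (r2 \<cdot> (q' \<cdot> P2)) \<cdot> kD"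
    using h hk kernelD(3)[OF k2(2)] D' hom_Obj(1)[OF k2(1)] by (simp_all add: kD(2,3))
  moreover have "r1 \<cdot> q' = (r1 \<cdot> P1) \<cdot> sg" "r2 \<cdot> q' = (r2 \<cdot> (q' \<cdot> P2)) \<cdot> sg"
    using h hk pullbackD(3)[OF pb1(1)] by (simp_all add: sg(2,3))
  ultimately obtain g where g: "g \<in> hom C D R" "r1 \<cdot> g = r1 \<cdot> P1" "r2 \<cdot> g = r2 \<cdot> (q' \<cdot> P2)"
    using split_ext_factor_through_jointly_monic[OF sD jm r] h by metis
  obtain u' where u': "u' \<in> hom C W D'" "p' \<cdot> u' = y" "q' \<cdot> u' = z"
    using pullback_factor[OF pb1(1)] xyz h by metis
  have "r2 \<cdot> x = (r2 \<cdot> p') \<cdot> u'" using xyz(4) u' h by (simp add: homD)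
  then obtain w where w: "w \<in> hom C W D" "P1 \<cdot> w = x" "P2 \<cdot> w = u'"
    using pullback_factor[OF pb2(1)] xyz(1) u'(1) h by metis
  note hw = homD[OF w(1)] homD[OF u'(1)] homD[OF g(1)]
  have "r1 \<cdot> (g \<cdot> w) = r1 \<cdot> x" "r2 \<cdot> (g \<cdot> w) = r2 \<cdot> z"
    using h hw by (simp_all add: comp_reassoc[OF g(2)] comp_reassoc[OF g(3)] w(2,3) u'(3))
  then show ?thesis using that g(1) w(1) comp_hom by blast
qed

lemma reflexive_relation_equiv_rel:
  assumes r: "r1 \<in> hom C R Z" "r2 \<in> hom C R Z" and jm: "jointly_monic C r1 r2"
    and d: "d \<in> hom C Z R" "r1 \<cdot> d = Id C Z" "r2 \<cdot> d = Id C Z"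
  shows "equiv_rel C Z r1 r2"
proof -
  note h = homD[OF r(1)] homD[OF r(2)] homD[OF d(1)]
  have R: "R \<in> Obj C" using r hom_Obj by blast
  have "d \<cdot> r2 \<in> hom C R R" "Id C R \<in> hom C R R" "d \<cdot> r1 \<in> hom C R R" "r2 \<cdot> (d \<cdot> r2) = r2 \<cdot> Id C R"
    "r1 \<cdot> Id C R = r1 \<cdot> (d \<cdot> r1)"
    using h R Id_hom by (simp_all add: hom_def comp_reassoc[OF d(2)] comp_reassoc[OF d(3)])
  then obtain s where s: "s \<in> hom C R R" "r1 \<cdot> s = r1 \<cdot> (d \<cdot> r2)" "r2 \<cdot> s = r2 \<cdot> (d \<cdot> r1)"
    using reflexive_relation_difunctional[OF r jm d] by metis
  show ?thesis
  proof (rule equiv_relI[OF r jm d s(1)])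
    show "r1 \<cdot> s = r2" "r2 \<cdot> s = r1" using s h by (simp_all add: comp_reassoc[OF d(2)] comp_reassoc[OF d(3)])
  next
    fix p q assume pq: "is_pullback C r2 r1 p q"
    note pd = pullbackD[OF pq]
    have "p \<in> hom C (Dom C p) R" "d \<cdot> (r2 \<cdot> p) \<in> hom C (Dom C p) R" "q \<in> hom C (Dom C p) R"
      "r2 \<cdot> p = r2 \<cdot> (d \<cdot> (r2 \<cdot> p))" "r1 \<cdot> (d \<cdot> (r2 \<cdot> p)) = r1 \<cdot> q"
      using pd h by (simp_all add: hom_def comp_reassoc[OF d(2)] comp_reassoc[OF d(3)])
    then show "\<exists>t\<in>hom C (Dom C p) R. r1 \<cdot> t = r1 \<cdot> p \<and> r2 \<cdot> t = r2 \<cdot> q"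
      using reflexive_relation_difunctional[OF r jm d] by metis
  qed
qed

lemma equiv_rel_restrict:
  assumes jm: "jointly_monic C r1 r2" and r: "r1 \<in> hom C R Z" "r2 \<in> hom C R Z"
    and s: "is_mono C s" "s \<in> hom C S R"
    and \<delta>: "\<delta> \<in> hom C Z S" "r1 \<cdot> (s \<cdot> \<delta>) = Id C Z" "r2 \<cdot> (s \<cdot> \<delta>) = Id C Z"
  shows "equiv_rel C Z (r1 \<cdot> s) (r2 \<cdot> s)"
proof (rule reflexive_relation_equiv_rel)
  note h = homD[OF r(1)] homD[OF r(2)] homD[OF s(2)] homD[OF \<delta>(1)]
  show "r1 \<cdot> s \<in> hom C S Z" "r2 \<cdot> s \<in> hom C S Z" using h by (simp_all add: hom_def)
  show "jointly_monic C (r1 \<cdot> s) (r2 \<cdot> s)"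
  proof (rule jointly_monicI)
    fix W x y assume x: "x \<in> hom C W (Dom C (r1 \<cdot> s))" "y \<in> hom C W (Dom C (r1 \<cdot> s))"
      and e: "(r1 \<cdot> s) \<cdot> x = (r1 \<cdot> s) \<cdot> y" "(r2 \<cdot> s) \<cdot> x = (r2 \<cdot> s) \<cdot> y"
    note hx = homD[OF x(1)] homD[OF x(2)]
    have "s \<cdot> x = s \<cdot> y" by (rule jointly_monicD[OF jm, of _ W]) (use hx h e in \<open>simp_all add: hom_def\<close>)
    then show "x = y" using monoD[OF s(1), of x W y] hx h by (simp add: hom_def)
  qed
  show "(r1 \<cdot> s) \<cdot> \<delta> = Id C Z" "(r2 \<cdot> s) \<cdot> \<delta> = Id C Z" using h \<delta>(2,3) by simp_all
qed (rule \<delta>(1))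

lemma kernel_pair_equiv_rel:
  assumes pb: "is_pullback C a a r1 r2" and a: "a \<in> hom C A B"
  shows "equiv_rel C A r1 r2"
proof -
  note pd = pullbackD[OF pb]
  have A: "A \<in> Obj C" using a hom_Obj by blast
  have r: "r1 \<in> hom C (Dom C r1) A" "r2 \<in> hom C (Dom C r1) A" using pd a by (simp_all add: hom_def)
  have "jointly_monic C r1 r2" by (rule jointly_monicI) (rule pullback_unique[OF pb], assumption+)
  moreover obtain d where "d \<in> hom C A (Dom C r1)" "r1 \<cdot> d = Id C A" "r2 \<cdot> d = Id C A"
    using pullback_factor[OF pb, of "Id C A" A "Id C A"] Id_hom[OF A] a by (simp add: hom_def) metis
  ultimately show ?thesis using reflexive_relation_equiv_rel[OF r] by blast
qed

lemma kernel_bourn_normal: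
  assumes k: "is_kernel C m a"
  shows "bourn_normal C m"
proof -
  note kd = kernelD[OF k]
  define S where "S = Dom C m"
  have ah: "a \<in> hom C (Dom C a) (Cod C a)" and mh: "m \<in> hom C S (Dom C a)"
    using kd unfolding S_def by (simp_all add: hom_def)
  note h = homD[OF ah] homD[OF mh]
  have S: "S \<in> Obj C" using mh hom_Obj by blast
  obtain R r1 r2 where pb: "is_pullback C a a r1 r2" "r1 \<in> hom C R (Dom C a)" "r2 \<in> hom C R (Dom C a)"
    using pullback_exists[OF ah ah] by blast
  obtain P p1 p2 where P: "is_product C S S P p1 p2" using product_exists[OF S S] by blast
  note qd = productD[OF P]
  note hq = homD[OF qd(2)] homD[OF qd(3)] homD[OF pb(2)] homD[OF pb(3)]
  have "m \<cdot> p1 \<in> hom C P (Dom C a)" "m \<cdot> p2 \<in> hom C P (Dom C a)" "a \<cdot> (m \<cdot> p1) = a \<cdot> (m \<cdot> p2)"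
    using hq h S by (simp_all add: hom_def comp_reassoc[OF kd(3)])
  then obtain mt where mt: "mt \<in> hom C P R" "r1 \<cdot> mt = m \<cdot> p1" "r2 \<cdot> mt = m \<cdot> p2"
    using pullback_factor[OF pb(1)] hq by metis
  show ?thesis
  proof (rule bourn_normalI[OF kernel_mono[OF k]])
    show "equiv_rel C (Cod C m) r1 r2" using kernel_pair_equiv_rel[OF pb(1) ah] h by simp
    show "is_product C (Dom C m) (Dom C m) P p1 p2" using P h by simp
    show "mt \<in> hom C P (Dom C r1)" using mt(1) hq by simp
    show "is_pullback C r1 m mt p1"
      using kernel_pullback_kernel_pair[OF k pb(1) _ _ mt(2,3)] P mt(1) hq h by simp
  qed (rule mt(2,3))+
qed

lemma characteristic_mono_is_mono:
  assumes "characteristic_mono C u"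
  shows "is_mono C u"
proof -
  have u: "u \<in> Arr C" using assms unfolding characteristic_mono_def by blast
  have "bourn_normal C (Id C (Cod C u))" using kernel_bourn_normal[OF Id_kernel] u by simp
  moreover have "Dom C (Id C (Cod C u)) = Cod C u" using u by simp
  ultimately have "bourn_normal C (Id C (Cod C u) \<cdot> u)"
    using assms unfolding characteristic_mono_def by blast
  then show ?thesis using u unfolding bourn_normal_def by simp
qed

end

section \<open>The conjugation morphism\<close>

text \<open>\<open>G\<close> and \<open>Y\<close> stand for the objects \<open>[X] x| X\<close> and \<open>[X]\<close>.\<close>

locale conjugation_setting = protomodular_categ +
  fixes X G Y k p i c P \<pi>1 \<pi>2 d e v
  assumes X_Obj: "X \<in> Obj C" and generic: "generic_split_ext C X k p i"
    and G_eq: "G = Dom C p" and Y_eq: "Y = Cod C p"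
    and product: "is_product C X X P \<pi>1 \<pi>2"
    and d: "d \<in> hom C X P" "\<pi>1 \<cdot> d = zero_map X X" "\<pi>2 \<cdot> d = Id C X"
    and e: "e \<in> hom C X P" "\<pi>1 \<cdot> e = Id C X" "\<pi>2 \<cdot> e = Id C X"
    and conj: "split_ext_mor C d \<pi>1 e k p i v c"
begin

lemma split_ext_generic: "split_ext C k p i" and Dom_k: "Dom C k = X"
  using generic_split_extD[OF generic] by auto

lemma generic_homs: "k \<in> hom C X G" "p \<in> hom C G Y" "i \<in> hom C Y G" "p \<cdot> i = Id C Y" "p \<cdot> k = zero_map X Y"
  using split_extD[OF split_ext_generic] Dom_k G_eq Y_eq by auto

lemma Objs: "X \<in> Obj C" "G \<in> Obj C" "Y \<in> Obj C" "P \<in> Obj C"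
  using generic_homs hom_Obj productD[OF product] X_Obj by blast+

lemma projections: "\<pi>1 \<in> hom C P X" "\<pi>2 \<in> hom C P X"
  using productD[OF product] by auto

lemma diagonal_split_ext: "split_ext C d \<pi>1 e"
  by (rule product_split_ext[OF product d e(1,2)])

lemma conj_homs: "v \<in> hom C P G" "c \<in> hom C X Y" "v \<cdot> d = k" "p \<cdot> v = c \<cdot> \<pi>1" "v \<cdot> e = i \<cdot> c"
  using split_ext_morD[OF conj] projections G_eq Y_eq by (auto simp: hom_def)

lemmas homs = homD[OF generic_homs(1)] homD[OF generic_homs(2)] homD[OF generic_homs(3)]
  homD[OF projections(1)] homD[OF projections(2)] homD[OF d(1)] homD[OF e(1)]
  homD[OF conj_homs(1)] homD[OF conj_homs(2)]

lemma conjugation_pullback: "is_pullback C p c v \<pi>1"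
  using split_ext_mor_pullback[OF diagonal_split_ext split_ext_generic _ conj] Dom_k homs by simp

lemma classifier_unique:
  "split_ext C \<kappa> \<alpha> \<beta> \<Longrightarrow> Dom C \<kappa> = X \<Longrightarrow> split_ext_mor C \<kappa> \<alpha> \<beta> k p i v1 w1 \<Longrightarrow>
   split_ext_mor C \<kappa> \<alpha> \<beta> k p i v2 w2 \<Longrightarrow> w1 = w2"
  using generic_split_ext_mor_unique[OF generic] by blast

text \<open>\<open>q\<close> classifies the split extension formed by the kernel pair of \<open>p\<close> and its diagonal; for
  groups it is \<open>(\<phi>, x) \<mapsto> conj(x) \<circ> \<phi>\<close>.\<close>

lemma second_projection_exists:
  obtains q where "q \<in> hom C G Y" "q \<cdot> k = c" "q \<cdot> i = Id C Y"
proof -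
  note sE = split_extD[OF split_ext_generic]
  obtain E e1 e2 where pb: "is_pullback C p p e1 e2" "e1 \<in> hom C E G" "e2 \<in> hom C E G"
    using pullback_exists[OF generic_homs(2) generic_homs(2)] by blast
  note h = homs homD[OF pb(2)] homD[OF pb(3)]
  obtain kE dE where kE: "split_ext C kE e2 dE" "kE \<in> hom C (Dom C k) (Dom C e1)" "e1 \<cdot> kE = k"
    "e2 \<cdot> kE = zero_map (Dom C k) (Dom C p)" "dE \<in> hom C (Dom C p) (Dom C e1)"
    "e1 \<cdot> dE = Id C (Dom C p)" "e2 \<cdot> dE = Id C (Dom C p)"
    using kernel_pair_split_ext[OF sE(4) pb(1)] by blast
  obtain VE q where mq: "split_ext_mor C kE e2 dE k p i VE q"
    using generic_split_ext_mor_exists[OF generic kE(1)] kE(2) Dom_k by (metis homD(2))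
  have q: "q \<in> hom C G Y" using split_ext_morD(2)[OF mq] h by simp
  have "Dom C d = Dom C k" "k \<cdot> \<pi>2 \<in> hom C (Dom C \<pi>1) (Dom C p)" "(k \<cdot> \<pi>2) \<cdot> d = k" "(k \<cdot> \<pi>2) \<cdot> e = k"
    "k \<in> hom C (Cod C \<pi>1) (Dom C p)" "p \<cdot> (k \<cdot> \<pi>2) = p \<cdot> (k \<cdot> \<pi>1)"
    using h Objs d(3) e(3) by (simp_all add: hom_def comp_reassoc[OF generic_homs(5)])
  from split_ext_mor_into_kernel_pair_ext[OF pb(1) kE(2-7) diagonal_split_ext this]
  obtain u where "split_ext_mor C d \<pi>1 e kE e2 dE u k" .
  then have "split_ext_mor C d \<pi>1 e k p i (VE \<cdot> u) (q \<cdot> k)"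
    using split_ext_mor_comp[OF diagonal_split_ext kE(1) split_ext_generic _ mq] by blast
  then have qk: "q \<cdot> k = c" using classifier_unique[OF diagonal_split_ext _ _ conj] h by simp
  have "Dom C k = Dom C k" "Id C G \<in> hom C (Dom C p) (Dom C p)" "Id C G \<cdot> k = k" "Id C G \<cdot> i = i"
    "i \<in> hom C (Cod C p) (Dom C p)" "p \<cdot> Id C G = p \<cdot> (i \<cdot> p)"
    using h Objs Id_hom by (simp_all add: hom_def comp_reassoc[OF generic_homs(4)])
  from split_ext_mor_into_kernel_pair_ext[OF pb(1) kE(2-7) split_ext_generic this]
  obtain u' where "split_ext_mor C k p i kE e2 dE u' i" .
  then have "split_ext_mor C k p i k p i (VE \<cdot> u') (q \<cdot> i)"
    using split_ext_mor_comp[OF split_ext_generic kE(1) split_ext_generic _ mq] by blast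
  then have "q \<cdot> i = Id C Y"
    using classifier_unique[OF split_ext_generic Dom_k _ split_ext_mor_Id[OF split_ext_generic]] h by simp
  then show ?thesis using that q qk by blast
qed

definition pr2 where "pr2 = (SOME q. q \<in> hom C G Y \<and> q \<cdot> k = c \<and> q \<cdot> i = Id C Y)"

lemma pr2: "pr2 \<in> hom C G Y" "pr2 \<cdot> k = c" "pr2 \<cdot> i = Id C Y"
  using someI_ex[of "\<lambda>q. q \<in> hom C G Y \<and> q \<cdot> k = c \<and> q \<cdot> i = Id C Y"] second_projection_exists
  unfolding pr2_def[symmetric] by blast+

lemma pr2_conj: "pr2 \<cdot> v = c \<cdot> \<pi>2"
proof (rule split_ext_jointly_epic[OF diagonal_split_ext])
  note hq = homD[OF pr2(1)]
  show "pr2 \<cdot> v \<in> hom C (Dom C \<pi>1) Y" "c \<cdot> \<pi>2 \<in> hom C (Dom C \<pi>1) Y" using homs hq by (simp_all add: hom_def)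
  show "(pr2 \<cdot> v) \<cdot> d = (c \<cdot> \<pi>2) \<cdot> d" using homs hq Objs by (simp add: conj_homs(3) pr2(2) d(3))
  show "(pr2 \<cdot> v) \<cdot> e = (c \<cdot> \<pi>2) \<cdot> e"
    using homs hq Objs by (simp add: conj_homs(5) comp_reassoc[OF pr2(3)] e(3))
qed

lemma product_split_ext_classifier:
  assumes Q: "is_product C B X Q q1 q2"
    and r: "r \<in> hom C X Q" "q1 \<cdot> r = zero_map X B" "q2 \<cdot> r = Id C X"
    and l: "l \<in> hom C B Q" "q1 \<cdot> l = Id C B" "q2 \<cdot> l = zero_map B X"
  shows "split_ext_mor C r q1 l k p i (k \<cdot> q2) (zero_map B Y)"
proof -
  note qd = productD[OF Q]
  note h = homs homD[OF qd(2)] homD[OF qd(3)] homD[OF r(1)] homD[OF l(1)]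
  have B: "B \<in> Obj C" using l(1) hom_Obj by blast
  show ?thesis
  proof (rule split_ext_morI)
    show "k \<cdot> q2 \<in> hom C (Dom C q1) (Dom C p)" "zero_map B Y \<in> hom C (Cod C q1) (Cod C p)"
      using h B Objs zero_map_hom by (simp_all add: hom_def)
    show "(k \<cdot> q2) \<cdot> r = k" using h by (simp add: r(3))
    show "p \<cdot> k \<cdot> q2 = zero_map B Y \<cdot> q1" using h B Objs by (simp add: comp_reassoc[OF generic_homs(5)])
    show "(k \<cdot> q2) \<cdot> l = i \<cdot> zero_map B Y" using h B Objs by (simp add: l(3))
  qed
qed

lemma split_ext_mor_into_diagonal:
  assumes Q: "is_product C B X Q q1 q2"
    and r: "r \<in> hom C X Q" "q1 \<cdot> r = zero_map X B" and l: "l \<in> hom C B Q" "q1 \<cdot> l = Id C B"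
    and g: "g \<in> hom C B X" and \<phi>: "\<phi> \<in> hom C Q X" "\<phi> \<cdot> r = Id C X" "\<phi> \<cdot> l = g"
  obtains w where "split_ext_mor C r q1 l d \<pi>1 e w g"
proof -
  note qd = productD[OF Q]
  note h = homs homD[OF qd(2)] homD[OF qd(3)] homD[OF r(1)] homD[OF l(1)] homD[OF g] homD[OF \<phi>(1)]
  have B: "B \<in> Obj C" using l(1) hom_Obj by blast
  have "g \<cdot> q1 \<in> hom C Q X" using h by (simp add: hom_def)
  then obtain w where w: "w \<in> hom C Q P" "\<pi>1 \<cdot> w = g \<cdot> q1" "\<pi>2 \<cdot> w = \<phi>"
    using product_factor[OF product _ \<phi>(1)] by blast
  note hw = homD[OF w(1)]
  have "split_ext_mor C r q1 l d \<pi>1 e w g"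
  proof (rule split_ext_morI)
    show "w \<in> hom C (Dom C q1) (Dom C \<pi>1)" "g \<in> hom C (Cod C q1) (Cod C \<pi>1)" using w(1) g h by simp_all
    show "w \<cdot> r = d"
      by (rule product_unique[OF product, of _ X])
        (use hw h B Objs d in \<open>simp_all add: hom_def comp_reassoc[OF w(2)] comp_reassoc[OF w(3)] r(2) \<phi>(2)\<close>)
    show "\<pi>1 \<cdot> w = g \<cdot> q1" by (rule w(2))
    show "w \<cdot> l = e \<cdot> g"
      by (rule product_unique[OF product, of _ B])
        (use hw h in \<open>simp_all add: hom_def comp_reassoc[OF w(2)] comp_reassoc[OF w(3)]
          comp_reassoc[OF e(2)] comp_reassoc[OF e(3)] l(2) \<phi>(3)\<close>)
  qed
  then show ?thesis using that by blast
qed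

lemma commute_conj_zero:
  assumes "commute C g (Id C X)"
  shows "c \<cdot> g = zero_map (Dom C g) Y"
proof -
  obtain Q q1 q2 l r \<phi> where cd: "is_product C (Dom C g) X Q q1 q2"
      "l \<in> hom C (Dom C g) Q" "q1 \<cdot> l = Id C (Dom C g)" "q2 \<cdot> l = zero_map (Dom C g) X"
      "r \<in> hom C X Q" "q1 \<cdot> r = zero_map X (Dom C g)" "q2 \<cdot> r = Id C X"
      "\<phi> \<in> hom C Q X" "\<phi> \<cdot> l = g" "\<phi> \<cdot> r = Id C X"
    using commute_IdE[OF assms X_Obj] by blast
  have g: "g \<in> hom C (Dom C g) X" using cd(8,9) cd(2) comp_hom by metis
  have s0: "split_ext C r q1 l" using product_split_ext[OF cd(1) cd(5-7) cd(2,3)] .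
  obtain w where "split_ext_mor C r q1 l d \<pi>1 e w g"
    using split_ext_mor_into_diagonal[OF cd(1) cd(5,6) cd(2,3) g cd(8,10,9)] .
  then have "split_ext_mor C r q1 l k p i (v \<cdot> w) (c \<cdot> g)"
    using split_ext_mor_comp[OF s0 diagonal_split_ext split_ext_generic _ conj] by blast
  then show ?thesis
    using classifier_unique[OF s0 _ _ product_split_ext_classifier[OF cd(1) cd(5-7) cd(2-4)]] cd(5)
    by (simp add: hom_def)
qed

text \<open>Conversely, if \<open>c \<cdot> g = 0\<close> then the split extension \<open>X \<rightarrow> B \<times> X \<rightleftharpoons> B\<close> with section
  \<open>\<langle>1, g\<rangle>\<close> has the same classifying map as the product one, so the two are isomorphic; the
  isomorphism supplies the cooperator of \<open>g\<close> and \<open>1\<^sub>X\<close>.\<close>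

lemma zero_conj_commute:
  assumes g: "g \<in> hom C B X" and cg: "c \<cdot> g = zero_map B Y"
  shows "commute C g (Id C X)"
proof -
  have B: "B \<in> Obj C" using g hom_Obj by blast
  obtain Q q1 q2 where Q: "is_product C B X Q q1 q2" using product_exists[OF B X_Obj] by blast
  note qd = productD[OF Q]
  obtain l where l: "l \<in> hom C B Q" "q1 \<cdot> l = Id C B" "q2 \<cdot> l = zero_map B X"
    using product_factor[OF Q Id_hom[OF B] zero_map_hom[OF B X_Obj]] by blast
  obtain r where r: "r \<in> hom C X Q" "q1 \<cdot> r = zero_map X B" "q2 \<cdot> r = Id C X"
    using product_factor[OF Q zero_map_hom[OF X_Obj B] Id_hom[OF X_Obj]] by blast
  obtain l' where l': "l' \<in> hom C B Q" "q1 \<cdot> l' = Id C B" "q2 \<cdot> l' = g"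
    using product_factor[OF Q Id_hom[OF B] g] by blast
  have s0: "split_ext C r q1 l" and s1: "split_ext C r q1 l'"
    using product_split_ext[OF Q r l(1,2)] product_split_ext[OF Q r l'(1,2)] by blast+
  obtain w where "split_ext_mor C r q1 l' d \<pi>1 e w g"
    using split_ext_mor_into_diagonal[OF Q r(1,2) l'(1,2) g qd(3) r(3) l'(3)] .
  then have "split_ext_mor C r q1 l' k p i (v \<cdot> w) (zero_map B Y)"
    using split_ext_mor_comp[OF s1 diagonal_split_ext split_ext_generic _ conj] cg by metis
  then obtain \<theta> where \<theta>: "split_ext_mor C r q1 l r q1 l' \<theta> (Id C (Cod C q1))"
    using split_ext_mor_factor[OF s0 s1 split_ext_generic _ _ _ product_split_ext_classifier[OF Q r l]]
      Dom_k r(1) by (metis homD(2))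
  note md = split_ext_morD[OF \<theta>] and h = homD[OF qd(2)] homD[OF qd(3)] homD[OF l(1)] homD[OF l'(1)]
  have "\<theta> \<in> hom C Q Q" using md(1) h by simp
  note ht = homD[OF this] homD[OF r(1)]
  have "q2 \<cdot> \<theta> \<in> hom C Q X" "(q2 \<cdot> \<theta>) \<cdot> l = g" "(q2 \<cdot> \<theta>) \<cdot> r = Id C X"
    using h ht by (simp_all add: hom_def md(3,5) l'(3) r(3))
  then show ?thesis using commute_IdI[OF g Q l r] by blast
qed

lemma conj_mono_trivial_center:
  assumes cm: "is_mono C c"
  shows "trivial_center C X"
proof -
  define z where "z = zero_map zero_obj X"
  have zh: "z \<in> hom C zero_obj X" using zero_map_hom[OF zero_obj_Obj X_Obj] z_def by simp
  note hz = homD[OF zh]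
  have "c \<cdot> z = zero_map zero_obj Y" using homs Objs unfolding z_def by simp
  then have zc: "commute C z (Id C X)" using zero_conj_commute[OF zh] by blast
  have "is_center C X z" unfolding is_center_def
  proof (intro conjI allI impI)
    show "z \<in> Arr C" "Cod C z = X" "commute C z (Id C X)" using hz zc by simp_all
    fix g assume g: "g \<in> Arr C \<and> Cod C g = X \<and> commute C g (Id C X)"
    define B where "B = Dom C g"
    have gh: "g \<in> hom C B X" using g B_def by (simp add: hom_def)
    have B: "B \<in> Obj C" using gh hom_Obj by blast
    have "c \<cdot> g = c \<cdot> zero_map B X" using commute_conj_zero[of g] g homs Objs B unfolding B_def by simp
    then have "g = zero_map B X" using monoD[OF cm, of g B "zero_map B X"] gh zero_map_hom[OF B X_Obj] homs by simp
    moreover have "z \<cdot> to_zero B = zero_map B X" using B Objs unfolding z_def by simp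
    ultimately have "z \<cdot> to_zero B = g" by simp
    show "\<exists>!h. h \<in> hom C (Dom C g) (Dom C z) \<and> z \<cdot> h = g"
    proof (rule ex1I[of _ "to_zero B"])
      show "to_zero B \<in> hom C (Dom C g) (Dom C z) \<and> z \<cdot> to_zero B = g"
        using to_zero_hom[OF B] \<open>z \<cdot> to_zero B = g\<close> hz B_def by simp
    qed (use to_zero_unique hz B_def in simp)
  qed
  moreover have "is_zero_obj C (Dom C z)" using hz zero_obj by simp
  ultimately show ?thesis unfolding trivial_center_def by blast
qed

lemma trivial_center_conj_mono:
  assumes "trivial_center C X"
  shows "is_mono C c"
proof -
  obtain z where z: "is_center C X z" "is_zero_obj C (Dom C z)"
    using assms unfolding trivial_center_def by blast
  have zh: "z \<in> hom C (Dom C z) X" using z(1) unfolding is_center_def by (simp add: hom_def)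
  show ?thesis
  proof (rule mono_if_trivial_kernel[OF conj_homs(2)])
    fix W g assume g: "g \<in> hom C W X" "c \<cdot> g = zero_map W Y"
    have "g \<in> Arr C \<and> Cod C g = X \<and> commute C g (Id C X)"
      using g(1) zero_conj_commute[OF g] by (simp add: hom_def)
    moreover have "\<forall>g. g \<in> Arr C \<and> Cod C g = X \<and> commute C g (Id C X) \<longrightarrow>
        (\<exists>!h. h \<in> hom C (Dom C g) (Dom C z) \<and> z \<cdot> h = g)"
      using z(1) unfolding is_center_def by (elim conjE)
    ultimately obtain h where "h \<in> hom C (Dom C g) (Dom C z)" "z \<cdot> h = g" by blast
    moreover have "Dom C g = W" using g(1) by (simp add: hom_def)
    ultimately have "h \<in> hom C W (Dom C z)" "z \<cdot> h = g" by simp_all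
    then show "g = zero_map W X" using comp_through_zero_obj[OF z(2) _ zh] by metis
  qed
qed

lemma trivial_center_iff_conj_mono: "trivial_center C X \<longleftrightarrow> is_mono C c"
  using conj_mono_trivial_center trivial_center_conj_mono by blast

lemma jointly_monic_p_pr2:
  assumes cm: "is_mono C c"
  shows "jointly_monic C p pr2"
proof -
  obtain Q t1 t2 where Q: "is_product C Y Y Q t1 t2" using product_exists Objs by metis
  note qd = productD[OF Q]
  obtain \<mu> where \<mu>: "\<mu> \<in> hom C G Q" "t1 \<cdot> \<mu> = p" "t2 \<cdot> \<mu> = pr2"
    using product_factor[OF Q generic_homs(2) pr2(1)] by blast
  note h = homs homD[OF pr2(1)] homD[OF \<mu>(1)] homD[OF qd(2)] homD[OF qd(3)]
  have "is_mono C \<mu>"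
  proof (rule mono_if_trivial_kernel[OF \<mu>(1)])
    fix W g assume g: "g \<in> hom C W G" "\<mu> \<cdot> g = zero_map W Q"
    note hg = homD[OF g(1)]
    have W: "W \<in> Obj C" using g hom_Obj by blast
    have "t1 \<cdot> (\<mu> \<cdot> g) = t1 \<cdot> zero_map W Q" "t2 \<cdot> (\<mu> \<cdot> g) = t2 \<cdot> zero_map W Q" using g(2) by simp_all
    then have pg: "p \<cdot> g = zero_map W Y" and qg: "pr2 \<cdot> g = zero_map W Y"
      using h hg W Objs by (simp_all add: comp_reassoc[OF \<mu>(2)] comp_reassoc[OF \<mu>(3)])
    obtain x where x: "x \<in> hom C W X" "k \<cdot> x = g"
      using kernel_factor[OF split_extD(4)[OF split_ext_generic], of g W] g(1) pg h Dom_k by metis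
    note hx = homD[OF x(1)]
    have "c \<cdot> x = c \<cdot> zero_map W X" using qg hx h W Objs by (simp add: x(2)[symmetric] comp_reassoc[OF pr2(2)])
    then have "x = zero_map W X" using monoD[OF cm, of x W "zero_map W X"] x(1) zero_map_hom[OF W X_Obj] h by simp
    then show "g = zero_map W G" using x(2) h W Objs by simp
  qed
  then show ?thesis using jointly_monic_iff_pairing_mono[OF Q generic_homs(2) pr2(1) \<mu>] by blast
qed

lemma split_ext_mor_into_normalising_relation:
  assumes m: "m \<in> hom C Y A" and jm: "jointly_monic C r1 r2" and r: "r1 \<in> hom C R A" "r2 \<in> hom C R A"
    and \<kappa>: "\<kappa> \<in> hom C X R" "r1 \<cdot> \<kappa> = zero_map X A" "r2 \<cdot> \<kappa> = m \<cdot> c"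
    and \<delta>: "\<delta> \<in> hom C A R" "r1 \<cdot> \<delta> = Id C A" "r2 \<cdot> \<delta> = Id C A"
  obtains v' where "split_ext_mor C k p i \<kappa> r1 \<delta> v' m"
proof -
  note h = homs homD[OF m] homD[OF r(1)] homD[OF r(2)] homD[OF \<kappa>(1)] homD[OF \<delta>(1)] homD[OF pr2(1)]
  have A: "A \<in> Obj C" using m hom_Obj by blast
  have "m \<cdot> p \<in> hom C (Dom C p) A" "m \<cdot> pr2 \<in> hom C (Dom C p) A" "\<delta> \<cdot> m \<in> hom C (Cod C p) R"
    "r1 \<cdot> \<kappa> = (m \<cdot> p) \<cdot> k" "r2 \<cdot> \<kappa> = (m \<cdot> pr2) \<cdot> k"
    "r1 \<cdot> (\<delta> \<cdot> m) = (m \<cdot> p) \<cdot> i" "r2 \<cdot> (\<delta> \<cdot> m) = (m \<cdot> pr2) \<cdot> i"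
    using h A Objs \<kappa>(2,3) by (simp_all add: hom_def generic_homs(4,5) pr2(2,3) comp_reassoc[OF \<delta>(2)]
        comp_reassoc[OF \<delta>(3)])
  then obtain v' where v': "v' \<in> hom C (Dom C p) R" "r1 \<cdot> v' = m \<cdot> p" "r2 \<cdot> v' = m \<cdot> pr2"
    using split_ext_factor_through_jointly_monic[OF split_ext_generic jm r] \<kappa>(1) h by metis
  note hv = homD[OF v'(1)]
  have "split_ext_mor C k p i \<kappa> r1 \<delta> v' m"
  proof (rule split_ext_morI)
    show "v' \<in> hom C (Dom C p) (Dom C r1)" "m \<in> hom C (Cod C p) (Cod C r1)" using v'(1) m h by simp_all
    show "v' \<cdot> k = \<kappa>"
      by (rule jointly_monicD[OF jm, of _ X])
        (use hv h A Objs \<kappa> in \<open>simp_all add: hom_def comp_reassoc[OF v'(2)] comp_reassoc[OF v'(3)]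
          generic_homs(5) pr2(2)\<close>)
    show "r1 \<cdot> v' = m \<cdot> p" by (rule v'(2))
    show "v' \<cdot> i = \<delta> \<cdot> m"
      by (rule jointly_monicD[OF jm, of _ Y])
        (use hv h in \<open>simp_all add: hom_def comp_reassoc[OF v'(2)] comp_reassoc[OF v'(3)]
          comp_reassoc[OF \<delta>(2)] comp_reassoc[OF \<delta>(3)] generic_homs(4) pr2(3)\<close>)
  qed
  then show ?thesis using that by blast
qed

lemma split_ext_mor_from_normalising_relation:
  assumes cm: "is_mono C c" and m: "m \<in> hom C Y A" and s: "split_ext C \<kappa> r1 \<delta>"
    and r: "r1 \<in> hom C R A" "r2 \<in> hom C R A"
    and \<kappa>: "\<kappa> \<in> hom C X R" "r1 \<cdot> \<kappa> = zero_map X A" "r2 \<cdot> \<kappa> = m \<cdot> c"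
    and \<delta>: "\<delta> \<in> hom C A R" "r1 \<cdot> \<delta> = Id C A" "r2 \<cdot> \<delta> = Id C A"
    and \<rho>: "\<rho> \<in> hom C A Y" "\<rho> \<cdot> m = Id C Y"
  obtains V where "split_ext_mor C \<kappa> r1 \<delta> k p i V \<rho>"
proof -
  note jm = jointly_monic_p_pr2[OF cm]
  note h = homs homD[OF m] homD[OF r(1)] homD[OF r(2)] homD[OF \<kappa>(1)] homD[OF \<delta>(1)] homD[OF pr2(1)]
    homD[OF \<rho>(1)]
  have "\<rho> \<cdot> r1 \<in> hom C (Dom C r1) Y" "\<rho> \<cdot> r2 \<in> hom C (Dom C r1) Y" "k \<in> hom C (Dom C \<kappa>) G"
    "i \<cdot> \<rho> \<in> hom C (Cod C r1) G" "p \<cdot> k = (\<rho> \<cdot> r1) \<cdot> \<kappa>" "pr2 \<cdot> k = (\<rho> \<cdot> r2) \<cdot> \<kappa>"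
    "p \<cdot> (i \<cdot> \<rho>) = (\<rho> \<cdot> r1) \<cdot> \<delta>" "pr2 \<cdot> (i \<cdot> \<rho>) = (\<rho> \<cdot> r2) \<cdot> \<delta>"
    using h Objs \<kappa>(2,3) \<delta>(2,3) by (simp_all add: hom_def generic_homs(5) pr2(2) comp_reassoc[OF \<rho>(2)]
        comp_reassoc[OF generic_homs(4)] comp_reassoc[OF pr2(3)])
  then obtain V where V: "V \<in> hom C (Dom C r1) G" "p \<cdot> V = \<rho> \<cdot> r1" "pr2 \<cdot> V = \<rho> \<cdot> r2"
    using split_ext_factor_through_jointly_monic[OF s jm generic_homs(2) pr2(1)] by metis
  note hV = homD[OF V(1)]
  have "split_ext_mor C \<kappa> r1 \<delta> k p i V \<rho>"
  proof (rule split_ext_morI)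
    show "V \<in> hom C (Dom C r1) (Dom C p)" "\<rho> \<in> hom C (Cod C r1) (Cod C p)" using V(1) \<rho>(1) h by simp_all
    show "V \<cdot> \<kappa> = k"
      by (rule jointly_monicD[OF jm, of _ X])
        (use hV h Objs \<kappa> in \<open>simp_all add: hom_def comp_reassoc[OF V(2)] comp_reassoc[OF V(3)]
          generic_homs(5) pr2(2) comp_reassoc[OF \<rho>(2)]\<close>)
    show "p \<cdot> V = \<rho> \<cdot> r1" by (rule V(2))
    show "V \<cdot> \<delta> = i \<cdot> \<rho>"
      by (rule jointly_monicD[OF jm, of _ A])
        (use hV h in \<open>simp_all add: hom_def comp_reassoc[OF V(2)] comp_reassoc[OF V(3)]
          comp_reassoc[OF generic_homs(4)] comp_reassoc[OF pr2(3)] \<delta>(2,3)\<close>)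
  qed
  then show ?thesis using that by blast
qed

text \<open>If \<open>m \<cdot> c\<close> is normal to an equivalence relation \<open>R\<close>, the kernel of the first projection
  of \<open>R\<close> is \<open>X\<close>; the base component of its classifying morphism is the unique retraction of \<open>m\<close>.\<close>

lemma characteristic_conj_strong_complete:
  assumes ch: "characteristic_mono C c"
  shows "strong_complete C Y"
  unfolding strong_complete_def
proof (intro conjI allI impI)
  show "Y \<in> Obj C" using Objs by simp
  have cm: "is_mono C c" using characteristic_mono_is_mono[OF ch] .
  fix m assume "protosplit_mono C m \<and> Dom C m = Y"
  then obtain a where ma: "is_kernel C m a" and Y: "Dom C m = Y" unfolding protosplit_mono_def by blast
  define A where "A = Cod C m"
  have mh: "m \<in> hom C Y A" using kernelD(1)[OF ma] Y A_def by (simp add: hom_def)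
  have "bourn_normal C (m \<cdot> c)"
    using ch kernel_bourn_normal[OF ma] homs Y unfolding characteristic_mono_def by simp
  then obtain r1 r2 PX p1 p2 mt where bn: "equiv_rel C A r1 r2" "is_product C X X PX p1 p2"
    "mt \<in> hom C PX (Dom C r1)" "r1 \<cdot> mt = (m \<cdot> c) \<cdot> p1" "r2 \<cdot> mt = (m \<cdot> c) \<cdot> p2"
    "is_pullback C r1 (m \<cdot> c) mt p1"
    by (rule bourn_normalE) (use homs mh A_def in \<open>simp add: hom_def\<close>)
  note ed = equiv_relD[OF bn(1)]
  define R where "R = Dom C r1"
  obtain \<delta> where \<delta>: "\<delta> \<in> hom C A R" "r1 \<cdot> \<delta> = Id C A" "r2 \<cdot> \<delta> = Id C A" using ed(4) R_def by blast
  obtain d' where d': "d' \<in> hom C X PX" "p1 \<cdot> d' = zero_map X X" "p2 \<cdot> d' = Id C X"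
    using product_factor[OF bn(2) zero_map_hom[OF X_Obj X_Obj] Id_hom[OF X_Obj]] by blast
  have mc: "m \<cdot> c \<in> hom C X A" using mh homs by (simp add: hom_def)
  have r: "r1 \<in> hom C R A" "r2 \<in> hom C R A" using ed(1,2) R_def by simp_all
  note h = homs homD[OF r(1)] homD[OF r(2)] homD[OF mh] homD[OF d'(1)] homD[OF bn(3)[folded R_def]] homD[OF productD(2)[OF bn(2)]]
    homD[OF productD(3)[OF bn(2)]]
  have \<kappa>: "mt \<cdot> d' \<in> hom C X R" "r1 \<cdot> (mt \<cdot> d') = zero_map X A" "r2 \<cdot> (mt \<cdot> d') = m \<cdot> c"
    using h d'(2,3) by (simp_all add: hom_def comp_reassoc[OF bn(4)] comp_reassoc[OF bn(5)] Objs)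
  have s: "split_ext C (mt \<cdot> d') r1 \<delta>"
    using split_extI[OF r(1) \<delta>(1,2) bourn_normal_kernel[OF bn(1-6) mc d']] .
  obtain V \<rho> where V: "split_ext_mor C (mt \<cdot> d') r1 \<delta> k p i V \<rho>"
    using generic_split_ext_mor_exists[OF generic s] \<kappa>(1) by (metis homD(2))
  have \<rho>: "\<rho> \<in> hom C A Y" using split_ext_morD(2)[OF V] r(1) homs by (simp add: hom_def)
  obtain v' where "split_ext_mor C k p i (mt \<cdot> d') r1 \<delta> v' m"
    using split_ext_mor_into_normalising_relation[OF mh ed(3) r \<kappa> \<delta>] .
  then have "split_ext_mor C k p i k p i (V \<cdot> v') (\<rho> \<cdot> m)"
    using split_ext_mor_comp[OF split_ext_generic s split_ext_generic _ V] by blast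
  then have \<rho>m: "\<rho> \<cdot> m = Id C Y"
    using classifier_unique[OF split_ext_generic Dom_k _ split_ext_mor_Id[OF split_ext_generic]] homs by simp
  have "r' = \<rho>" if r': "r' \<in> hom C A Y" "r' \<cdot> m = Id C Y" for r'
  proof -
    obtain V' where "split_ext_mor C (mt \<cdot> d') r1 \<delta> k p i V' r'"
      using split_ext_mor_from_normalising_relation[OF cm mh s r \<kappa> \<delta> r'] .
    then show ?thesis using classifier_unique[OF s _ _ V] \<kappa>(1) by (simp add: hom_def)
  qed
  then show "\<exists>!r. r \<in> hom C (Cod C m) Y \<and> r \<cdot> m = Id C Y"
    using \<rho> \<rho>m A_def by blast
qed

lemma conj_normal_pullback:
  assumes pbn: "is_pullback C r1 n mt p1" and PY: "is_product C Y Y PY p1 p2"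
    and r1: "r1 \<in> hom C R Z" and n: "n \<in> hom C Y Z" and mt: "mt \<in> hom C PY R" and \<delta>: "\<delta> \<in> hom C Z R"
    and \<rho>: "\<rho> \<in> hom C R Y" "\<rho> \<cdot> mt = p2" "\<rho> \<cdot> (\<delta> \<cdot> n) = Id C Y"
    and S: "s1 \<in> hom C S R" "s2 \<in> hom C S G" "\<rho> \<cdot> (\<delta> \<cdot> (r1 \<cdot> s1)) = p \<cdot> s2" "\<rho> \<cdot> s1 = pr2 \<cdot> s2"
      "jointly_monic C s1 s2"
    and cc: "cc \<in> hom C P PY" "p1 \<cdot> cc = c \<cdot> \<pi>1" "p2 \<cdot> cc = c \<cdot> \<pi>2"
    and st: "st \<in> hom C P S" "s1 \<cdot> st = mt \<cdot> cc" "s2 \<cdot> st = v"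
  shows "is_pullback C (r1 \<cdot> s1) (n \<cdot> c) st \<pi>1"
proof -
  note qd = productD[OF PY] and pd = pullbackD[OF pbn]
  note h = homs homD[OF r1] homD[OF n] homD[OF mt] homD[OF \<delta>] homD[OF \<rho>(1)] homD[OF S(1)] homD[OF S(2)]
    homD[OF cc(1)] homD[OF st(1)] homD[OF qd(2)] homD[OF qd(3)] homD[OF pr2(1)]
  have sq: "r1 \<cdot> mt = n \<cdot> p1" using pd(3) .
  have S3: "p \<cdot> s2 = \<rho> \<cdot> (\<delta> \<cdot> (r1 \<cdot> s1))" and S4: "pr2 \<cdot> s2 = \<rho> \<cdot> s1" using S(3,4) by simp_all
  show ?thesis
  proof (rule pullbackI[of _ S Z _ X _ P])
    show "r1 \<cdot> s1 \<in> hom C S Z" "n \<cdot> c \<in> hom C X Z" "st \<in> hom C P S" "\<pi>1 \<in> hom C P X"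
      using h st(1) projections(1) by (simp_all add: hom_def)
    show "(r1 \<cdot> s1) \<cdot> st = (n \<cdot> c) \<cdot> \<pi>1"
      using h by (simp add: st(2) comp_reassoc[OF sq] cc(2))
  next
    fix W x y assume x: "x \<in> hom C W S" and y: "y \<in> hom C W X" and e: "(r1 \<cdot> s1) \<cdot> x = (n \<cdot> c) \<cdot> y"
    note hx = homD[OF x] homD[OF y]
    have "s1 \<cdot> x \<in> hom C W (Dom C r1)" "c \<cdot> y \<in> hom C W (Dom C n)" "r1 \<cdot> (s1 \<cdot> x) = n \<cdot> (c \<cdot> y)"
      using e hx h by (simp_all add: hom_def)
    then obtain h1 where h1: "h1 \<in> hom C W PY" "mt \<cdot> h1 = s1 \<cdot> x" "p1 \<cdot> h1 = c \<cdot> y"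
      using pullback_factor[OF pbn] h by metis
    note hh1 = homD[OF h1(1)]
    have "p \<cdot> (s2 \<cdot> x) = c \<cdot> y"
      using hx h e by (simp add: comp_reassoc[OF S3] comp_reassoc3[OF \<rho>(3)])
    then obtain h2 where h2: "h2 \<in> hom C W P" "v \<cdot> h2 = s2 \<cdot> x" "\<pi>1 \<cdot> h2 = y"
      using pullback_factor[OF conjugation_pullback, of "s2 \<cdot> x" W y] hx h by (simp add: hom_def) metis
    note hh2 = homD[OF h2(1)]
    have "cc \<cdot> h2 = h1"
    proof (rule product_unique[OF PY, of _ W])
      show "cc \<cdot> h2 \<in> hom C W PY" "h1 \<in> hom C W PY" using h hh2 h1(1) by (simp_all add: hom_def)
      show "p1 \<cdot> cc \<cdot> h2 = p1 \<cdot> h1" using h hh2 by (simp add: comp_reassoc[OF cc(2)] h2(3) h1(3))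
      have "pr2 \<cdot> (s2 \<cdot> x) = p2 \<cdot> h1"
        using h hx hh1 by (simp add: comp_reassoc[OF S4] h1(2)[symmetric] comp_reassoc[OF \<rho>(2)])
      then show "p2 \<cdot> cc \<cdot> h2 = p2 \<cdot> h1"
        using h hh2 by (simp add: comp_reassoc[OF cc(3)] comp_reassoc[OF pr2_conj[symmetric]] h2(2))
    qed
    have "st \<cdot> h2 = x"
      by (rule jointly_monicD[OF S(5), of _ W])
        (use h hh2 hx \<open>cc \<cdot> h2 = h1\<close> in \<open>simp_all add: hom_def comp_reassoc[OF st(2)] comp_reassoc[OF st(3)] h1(2) h2(2)\<close>)
    then show "\<exists>h\<in>hom C W P. st \<cdot> h = x \<and> \<pi>1 \<cdot> h = y" using h2(1,3) by blast
  next
    fix W g g' assume g: "g \<in> hom C W P" "g' \<in> hom C W P" and eq: "st \<cdot> g = st \<cdot> g'" "\<pi>1 \<cdot> g = \<pi>1 \<cdot> g'"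
    have "v \<cdot> g = v \<cdot> g'" using eq(1) g h by (metis comp_reassoc[OF st(3)] homD)
    then show "g = g'" using pullback_unique[OF conjugation_pullback, of g W g'] g eq(2) h by simp
  qed
qed

lemma conj_restricted_relation:
  assumes cm: "is_mono C c" and r: "r1 \<in> hom C R Z" "r2 \<in> hom C R Z" "jointly_monic C r1 r2"
    and \<delta>: "\<delta> \<in> hom C Z R" "r1 \<cdot> \<delta> = Id C Z" "r2 \<cdot> \<delta> = Id C Z" and \<rho>: "\<rho> \<in> hom C R Y"
  obtains S s1 s2 where "s1 \<in> hom C S R" "s2 \<in> hom C S G" "\<rho> \<cdot> (\<delta> \<cdot> (r1 \<cdot> s1)) = p \<cdot> s2"
    "\<rho> \<cdot> s1 = pr2 \<cdot> s2" "jointly_monic C s1 s2" "equiv_rel C Z (r1 \<cdot> s1) (r2 \<cdot> s1)"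
    "\<And>W x y. x \<in> hom C W R \<Longrightarrow> y \<in> hom C W G \<Longrightarrow> (\<rho> \<cdot> (\<delta> \<cdot> r1)) \<cdot> x = p \<cdot> y \<Longrightarrow>
      \<rho> \<cdot> x = pr2 \<cdot> y \<Longrightarrow> \<exists>h \<in> hom C W S. s1 \<cdot> h = x \<and> s2 \<cdot> h = y"
proof -
  note h = homs homD[OF r(1)] homD[OF r(2)] homD[OF \<delta>(1)] homD[OF \<rho>] homD[OF pr2(1)]
  have "\<rho> \<cdot> (\<delta> \<cdot> r1) \<in> hom C R Y" using h by (simp add: hom_def)
  obtain S s1 s2 where S: "s1 \<in> hom C S R" "s2 \<in> hom C S G" "(\<rho> \<cdot> (\<delta> \<cdot> r1)) \<cdot> s1 = p \<cdot> s2"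
    "\<rho> \<cdot> s1 = pr2 \<cdot> s2" "jointly_monic C s1 s2"
    and S_factor: "\<And>W x y. x \<in> hom C W R \<Longrightarrow> y \<in> hom C W G \<Longrightarrow> (\<rho> \<cdot> (\<delta> \<cdot> r1)) \<cdot> x = p \<cdot> y \<Longrightarrow>
      \<rho> \<cdot> x = pr2 \<cdot> y \<Longrightarrow> \<exists>h \<in> hom C W S. s1 \<cdot> h = x \<and> s2 \<cdot> h = y"
    by (rule joint_pullback_exists[OF \<open>\<rho> \<cdot> (\<delta> \<cdot> r1) \<in> hom C R Y\<close> \<rho> generic_homs(2) pr2(1)])
      (rule that; assumption)
  note hS = homD[OF S(1)] homD[OF S(2)]
  have S3: "\<rho> \<cdot> (\<delta> \<cdot> (r1 \<cdot> s1)) = p \<cdot> s2" using S(3) h hS by simp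
  have "is_mono C s1"
  proof (rule monoI)
    show "s1 \<in> Arr C" using hS by simp
    fix W x y assume xy: "x \<in> hom C W (Dom C s1)" "y \<in> hom C W (Dom C s1)" and e: "s1 \<cdot> x = s1 \<cdot> y"
    note hx = homD[OF xy(1)] homD[OF xy(2)]
    have "s2 \<cdot> x = s2 \<cdot> y"
      by (rule jointly_monicD[OF jointly_monic_p_pr2[OF cm], of _ W])
        (use hx hS h e in \<open>simp_all add: hom_def comp_reassoc[OF S3[symmetric]] comp_reassoc[OF S(4)[symmetric]]\<close>)
    then show "x = y" by (rule jointly_monicD[OF S(5) xy e])
  qed
  moreover have "i \<cdot> (\<rho> \<cdot> \<delta>) \<in> hom C Z G" "(\<rho> \<cdot> (\<delta> \<cdot> r1)) \<cdot> \<delta> = p \<cdot> (i \<cdot> (\<rho> \<cdot> \<delta>))"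
    "\<rho> \<cdot> \<delta> = pr2 \<cdot> (i \<cdot> (\<rho> \<cdot> \<delta>))"
    using h by (simp_all add: hom_def \<delta>(2) comp_reassoc[OF generic_homs(4)] comp_reassoc[OF pr2(3)])
  then obtain \<delta>S where "\<delta>S \<in> hom C Z S" "s1 \<cdot> \<delta>S = \<delta>" using S_factor[OF \<delta>(1)] by blast
  ultimately have "equiv_rel C Z (r1 \<cdot> s1) (r2 \<cdot> s1)"
    using equiv_rel_restrict[OF r(3) r(1,2) _ S(1)] \<delta>(2,3) by simp
  then show ?thesis using that S(1,2) S3 S(4,5) S_factor by blast
qed

lemma bourn_normal_comp_conj:
  assumes cm: "is_mono C c" and sc: "strong_complete C Y" and bn: "bourn_normal C n" and nY: "Dom C n = Y"
  shows "bourn_normal C (n \<cdot> c)"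
proof -
  define Z where "Z = Cod C n"
  obtain r1 r2 PY p1 p2 mt where nm: "is_mono C n" and bd: "equiv_rel C Z r1 r2"
    "is_product C Y Y PY p1 p2" "mt \<in> hom C PY (Dom C r1)" "r1 \<cdot> mt = n \<cdot> p1" "r2 \<cdot> mt = n \<cdot> p2"
    "is_pullback C r1 n mt p1"
    using bourn_normalE[OF bn] nY Z_def by metis
  note ed = equiv_relD[OF bd(1)]
  define R where "R = Dom C r1"
  obtain \<delta> where \<delta>: "\<delta> \<in> hom C Z R" "r1 \<cdot> \<delta> = Id C Z" "r2 \<cdot> \<delta> = Id C Z" using ed(4) R_def by blast
  have n: "n \<in> hom C Y Z" using mono_Arr[OF nm] nY Z_def by (simp add: hom_def)
  have r: "r1 \<in> hom C R Z" "r2 \<in> hom C R Z" using ed(1,2) R_def by simp_all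
  obtain \<rho> where \<rho>: "\<rho> \<in> hom C R Y" "\<rho> \<cdot> mt = p2" "\<rho> \<cdot> (\<delta> \<cdot> n) = Id C Y"
    using strong_complete_normal_retraction[OF sc bd n] \<delta> R_def by blast
  obtain S s1 s2 where S: "s1 \<in> hom C S R" "s2 \<in> hom C S G" "\<rho> \<cdot> (\<delta> \<cdot> (r1 \<cdot> s1)) = p \<cdot> s2"
    "\<rho> \<cdot> s1 = pr2 \<cdot> s2" "jointly_monic C s1 s2" "equiv_rel C Z (r1 \<cdot> s1) (r2 \<cdot> s1)"
    and S_factor: "\<And>W x y. x \<in> hom C W R \<Longrightarrow> y \<in> hom C W G \<Longrightarrow> (\<rho> \<cdot> (\<delta> \<cdot> r1)) \<cdot> x = p \<cdot> y \<Longrightarrow>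
      \<rho> \<cdot> x = pr2 \<cdot> y \<Longrightarrow> \<exists>h \<in> hom C W S. s1 \<cdot> h = x \<and> s2 \<cdot> h = y"
    by (rule conj_restricted_relation[OF cm r ed(3) \<delta> \<rho>(1)]) (rule that; assumption)
  note h = homs homD[OF n] homD[OF r(1)] homD[OF r(2)] homD[OF \<delta>(1)] homD[OF \<rho>(1)] homD[OF pr2(1)]
    homD[OF bd(3)[folded R_def]] homD[OF productD(2)[OF bd(2)]] homD[OF productD(3)[OF bd(2)]]
    homD[OF S(1)] homD[OF S(2)]
  have "c \<cdot> \<pi>1 \<in> hom C P Y" "c \<cdot> \<pi>2 \<in> hom C P Y" using h by (simp_all add: hom_def)
  then obtain cc where cc: "cc \<in> hom C P PY" "p1 \<cdot> cc = c \<cdot> \<pi>1" "p2 \<cdot> cc = c \<cdot> \<pi>2"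
    using product_factor[OF bd(2)] by blast
  note hc = homD[OF cc(1)]
  have "mt \<cdot> cc \<in> hom C P R" "(\<rho> \<cdot> (\<delta> \<cdot> r1)) \<cdot> (mt \<cdot> cc) = p \<cdot> v" "\<rho> \<cdot> (mt \<cdot> cc) = pr2 \<cdot> v"
    using h hc by (simp_all add: hom_def comp_reassoc[OF bd(4)] cc(2) comp_reassoc3[OF \<rho>(3)] conj_homs(4)
        comp_reassoc[OF \<rho>(2)] cc(3) pr2_conj)
  then obtain st where st: "st \<in> hom C P S" "s1 \<cdot> st = mt \<cdot> cc" "s2 \<cdot> st = v"
    using S_factor[OF _ conj_homs(1)] by blast
  note hst = homD[OF st(1)]
  show "bourn_normal C (n \<cdot> c)"
  proof (rule bourn_normalI)
    show "is_mono C (n \<cdot> c)" using mono_comp[OF cm nm] h by simp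
    show "equiv_rel C (Cod C (n \<cdot> c)) (r1 \<cdot> s1) (r2 \<cdot> s1)" using S(6) h by simp
    show "is_product C (Dom C (n \<cdot> c)) (Dom C (n \<cdot> c)) P \<pi>1 \<pi>2" using product h by simp
    show "st \<in> hom C P (Dom C (r1 \<cdot> s1))" using st(1) h by simp
    show "(r1 \<cdot> s1) \<cdot> st = (n \<cdot> c) \<cdot> \<pi>1" "(r2 \<cdot> s1) \<cdot> st = (n \<cdot> c) \<cdot> \<pi>2"
      using h hst hc by (simp_all add: st(2) comp_reassoc[OF bd(4)] comp_reassoc[OF bd(5)] cc(2,3))
    show "is_pullback C (r1 \<cdot> s1) (n \<cdot> c) st \<pi>1"
      using conj_normal_pullback[OF bd(6,2) r(1) n bd(3)[folded R_def] \<delta>(1) \<rho> S(1-5) cc st] .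
  qed
qed

lemma trivial_center_strong_complete_characteristic:
  assumes "trivial_center C X" and "strong_complete C Y"
  shows "characteristic_mono C c"
  unfolding characteristic_mono_def
  using bourn_normal_comp_conj[OF trivial_center_conj_mono[OF assms(1)] assms(2)] homs by auto

end

theorem theorem5p5:
  fixes C :: "('o, 'm) cat" and X :: 'o and k p i c :: 'm
  assumes "category C" and "pointed C" and "finitely_complete C" and "protomodular C"
    and "X \<in> Obj C"
    and "generic_split_ext C X k p i"
    and "conjugation C X k p i c"
  shows "((\<exists>k' p' i'. generic_split_ext C (Cod C p) k' p' i') \<and> characteristic_mono C c)
         \<longleftrightarrow> (trivial_center C X \<and> strong_complete C (Cod C p))"
proof -
  interpret protomodular_categ C using assms(1-4) by unfold_locales
  obtain P \<pi>1 \<pi>2 d e v where cj: "is_product C X X P \<pi>1 \<pi>2"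
      "d \<in> hom C X P" "zero_arr C (Comp C \<pi>1 d)" "Comp C \<pi>2 d = Id C X"
      "e \<in> hom C X P" "Comp C \<pi>1 e = Id C X" "Comp C \<pi>2 e = Id C X"
      "split_ext_mor C d \<pi>1 e k p i v c"
    using assms(7) unfolding conjugation_def by blast
  have "Comp C \<pi>1 d = zero_map X X"
    using zero_arrD[OF cj(3) comp_hom[OF cj(2) productD(2)[OF cj(1)]]] .
  then interpret conjugation_setting C X "Dom C p" "Cod C p" k p i c P \<pi>1 \<pi>2 d e v
    using assms(5,6) cj by unfold_locales simp_all
  show ?thesis
    using characteristic_conj_strong_complete trivial_center_iff_conj_mono characteristic_mono_is_mono
      trivial_center_strong_complete_characteristic strong_complete_generic_split_ext by blast
qed

end
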